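(* Let $h:\mathbb{R}\to\mathbb{R}$ be a smooth function that is flat at $0$ and positive everywhere else, such that $\xi=h\,\partial/\partial x$ is complete, and let $\psi$ be the time-one flow of $\xi$. Let $\mathbb{R}/{\sim}$ be the orbit space of the $\mathbb{Z}$-action on $\mathbb{R}$ generated by $\psi$, with the quotient diffeology. Then $\mathbb{R}/{\sim}$ is not a diffeological quasifold.
   Context: Diffeology: plots, smooth maps, D-topology, subset and quotient diffeologies are standard. A diffeological $n$-quasifold is a diffeological space, second countable in its D-topology, such that each point has a D-open neighbourhood $U$ diffeomorphic (with its subset diffeology) to $\mathsf V/\Gamma$ (quotient diffeology), where $\Gamma$ is a countable subgroup of the affine group $\mathrm{Aff}(\mathbb{R}^n)$ and $\mathsf V\subseteq\mathbb{R}^n$ is open and $\Gamma$-invariant. A diffeological quasifold is a diffeological $n$-quasifold for some $n$. *)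

theory Defs
  imports "HOL-Analysis.Analysis"
begin

text \<open>Points of R^n are functions x :: nat => real with x i = 0 for i >= n.
  This explicit carrier lets the dimension n vary inside definitions
  (a diffeology quantifies over all n).\<close>

definition Rn :: "nat \<Rightarrow> (nat \<Rightarrow> real) set" where
  "Rn n = {x. \<forall>i\<ge>n. x i = 0}"

definition dist_Rn :: "nat \<Rightarrow> (nat \<Rightarrow> real) \<Rightarrow> (nat \<Rightarrow> real) \<Rightarrow> real" where
  "dist_Rn n x y = sqrt (\<Sum>i<n. (x i - y i)^2)"

definition open_Rn :: "nat \<Rightarrow> (nat \<Rightarrow> real) set \<Rightarrow> bool" where
  "open_Rn n U \<longleftrightarrow> U \<subseteq> Rn n \<and>
     (\<forall>x\<in>U. \<exists>e>0. \<forall>y\<in>Rn n. dist_Rn n x y < e \<longrightarrow> y \<in> U)"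

definition has_partial ::
  "nat \<Rightarrow> (nat \<Rightarrow> real) set \<Rightarrow> ((nat \<Rightarrow> real) \<Rightarrow> real) \<Rightarrow> nat \<Rightarrow> (nat \<Rightarrow> real) \<Rightarrow> real \<Rightarrow> bool" where
  "has_partial n U g i x D \<longleftrightarrow>
     ((\<lambda>t. g (x(i := x i + t))) has_real_derivative D) (at 0 within {t. x(i := x i + t) \<in> U})"

definition partial ::
  "nat \<Rightarrow> (nat \<Rightarrow> real) set \<Rightarrow> ((nat \<Rightarrow> real) \<Rightarrow> real) \<Rightarrow> nat \<Rightarrow> (nat \<Rightarrow> real) \<Rightarrow> real" where
  "partial n U g i x = (THE D. has_partial n U g i x D)"

definition cont_Rn :: "nat \<Rightarrow> (nat \<Rightarrow> real) set \<Rightarrow> ((nat \<Rightarrow> real) \<Rightarrow> real) \<Rightarrow> bool" where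
  "cont_Rn n U g \<longleftrightarrow>
     (\<forall>x\<in>U. \<forall>e>0. \<exists>d>0. \<forall>y\<in>U. dist_Rn n x y < d \<longrightarrow> \<bar>g y - g x\<bar> < e)"

fun Ck :: "nat \<Rightarrow> nat \<Rightarrow> (nat \<Rightarrow> real) set \<Rightarrow> ((nat \<Rightarrow> real) \<Rightarrow> real) \<Rightarrow> bool" where
  "Ck n 0 U g \<longleftrightarrow> cont_Rn n U g"
| "Ck n (Suc k) U g \<longleftrightarrow> cont_Rn n U g \<and>
     (\<forall>i<n. \<forall>x\<in>U. \<exists>D. has_partial n U g i x D) \<and>
     (\<forall>i<n. Ck n k U (partial n U g i))"

definition smooth_scalar :: "nat \<Rightarrow> (nat \<Rightarrow> real) set \<Rightarrow> ((nat \<Rightarrow> real) \<Rightarrow> real) \<Rightarrow> bool" where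
  "smooth_scalar n U g \<longleftrightarrow> (\<forall>k. Ck n k U g)"

definition smooth_Rn ::
  "nat \<Rightarrow> nat \<Rightarrow> (nat \<Rightarrow> real) set \<Rightarrow> ((nat \<Rightarrow> real) \<Rightarrow> (nat \<Rightarrow> real)) \<Rightarrow> bool" where
  "smooth_Rn n m U f \<longleftrightarrow> f ` U \<subseteq> Rn m \<and> (\<forall>j<m. smooth_scalar n U (\<lambda>x. f x j))"

text \<open>A parametrization is given by its dimension n, its (open) domain U in R^n
  and the map itself; dplots S n U p says that p restricted to U is a plot.\<close>
record 'a dspace =
  dcarrier :: "'a set"
  dplots :: "nat \<Rightarrow> (nat \<Rightarrow> real) set \<Rightarrow> ((nat \<Rightarrow> real) \<Rightarrow> 'a) \<Rightarrow> bool"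

definition diffeology :: "'a dspace \<Rightarrow> bool" where
  "diffeology S \<longleftrightarrow>
     (\<forall>n U p. dplots S n U p \<longrightarrow> open_Rn n U \<and> p ` U \<subseteq> dcarrier S)
   \<and> (\<forall>n U p q. dplots S n U p \<and> (\<forall>r\<in>U. p r = q r) \<longrightarrow> dplots S n U q)
   \<and> (\<forall>n U x. open_Rn n U \<and> x \<in> dcarrier S \<longrightarrow> dplots S n U (\<lambda>_. x))
   \<and> (\<forall>n U p. open_Rn n U \<and> p ` U \<subseteq> dcarrier S \<and>
        (\<forall>r\<in>U. \<exists>W. open_Rn n W \<and> r \<in> W \<and> W \<subseteq> U \<and> dplots S n W p)
        \<longrightarrow> dplots S n U p)
   \<and> (\<forall>n U p m V F. dplots S n U p \<and> open_Rn m V \<and> smooth_Rn m n V F \<and> F ` V \<subseteq> U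
        \<longrightarrow> dplots S m V (p \<circ> F))"

definition dsmooth :: "'a dspace \<Rightarrow> 'b dspace \<Rightarrow> ('a \<Rightarrow> 'b) \<Rightarrow> bool" where
  "dsmooth S T F \<longleftrightarrow> F ` dcarrier S \<subseteq> dcarrier T \<and>
     (\<forall>n U p. dplots S n U p \<longrightarrow> dplots T n U (F \<circ> p))"

definition diffeomorphic :: "'a dspace \<Rightarrow> 'b dspace \<Rightarrow> bool" where
  "diffeomorphic S T \<longleftrightarrow> (\<exists>F G. dsmooth S T F \<and> dsmooth T S G \<and>
     (\<forall>x\<in>dcarrier S. G (F x) = x) \<and> (\<forall>y\<in>dcarrier T. F (G y) = y))"

definition D_open :: "'a dspace \<Rightarrow> 'a set \<Rightarrow> bool" where
  "D_open S A \<longleftrightarrow> A \<subseteq> dcarrier S \<and>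
     (\<forall>n U p. dplots S n U p \<longrightarrow> open_Rn n {r\<in>U. p r \<in> A})"

definition D_second_countable :: "'a dspace \<Rightarrow> bool" where
  "D_second_countable S \<longleftrightarrow> (\<exists>B. countable B \<and> (\<forall>b\<in>B. D_open S b) \<and>
     (\<forall>A. D_open S A \<longrightarrow> (\<exists>B'\<subseteq>B. A = \<Union>B')))"

definition subspace :: "'a dspace \<Rightarrow> 'a set \<Rightarrow> 'a dspace" where
  "subspace S A = \<lparr>dcarrier = A, dplots = (\<lambda>n U p. dplots S n U p \<and> p ` U \<subseteq> A)\<rparr>"

definition quotient_space :: "'a dspace \<Rightarrow> ('a \<Rightarrow> 'b) \<Rightarrow> 'b dspace" where
  "quotient_space S proj = \<lparr>dcarrier = proj ` dcarrier S,
     dplots = (\<lambda>n U P. open_Rn n U \<and>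
        (\<forall>r\<in>U. \<exists>W. open_Rn n W \<and> r \<in> W \<and> W \<subseteq> U \<and>
            (\<exists>q. dplots S n W q \<and> (\<forall>s\<in>W. P s = proj (q s)))))\<rparr>"

definition real_space :: "real dspace" where
  "real_space = \<lparr>dcarrier = UNIV, dplots = (\<lambda>m U p. open_Rn m U \<and> smooth_scalar m U p)\<rparr>"

definition open_subset_space :: "nat \<Rightarrow> (nat \<Rightarrow> real) set \<Rightarrow> (nat \<Rightarrow> real) dspace" where
  "open_subset_space n V = \<lparr>dcarrier = V,
     dplots = (\<lambda>m U p. open_Rn m U \<and> smooth_Rn m n U p \<and> p ` U \<subseteq> V)\<rparr>"

definition aff_map :: "nat \<Rightarrow> (nat \<Rightarrow> nat \<Rightarrow> real) \<Rightarrow> (nat \<Rightarrow> real) \<Rightarrow> (nat \<Rightarrow> real) \<Rightarrow> (nat \<Rightarrow> real)" where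
  "aff_map n A b x = (\<lambda>i. if i < n then (\<Sum>j<n. A i j * x j) + b i else 0)"

definition Aff :: "nat \<Rightarrow> ((nat \<Rightarrow> real) \<Rightarrow> (nat \<Rightarrow> real)) set" where
  "Aff n = {g. (\<exists>A b. g = aff_map n A b) \<and> bij_betw g (Rn n) (Rn n)}"

definition aff_id :: "nat \<Rightarrow> (nat \<Rightarrow> real) \<Rightarrow> (nat \<Rightarrow> real)" where
  "aff_id n = aff_map n (\<lambda>i j. if i = j then 1 else 0) (\<lambda>_. 0)"

definition subgroup_Aff :: "nat \<Rightarrow> ((nat \<Rightarrow> real) \<Rightarrow> (nat \<Rightarrow> real)) set \<Rightarrow> bool" where
  "subgroup_Aff n \<Gamma> \<longleftrightarrow> \<Gamma> \<subseteq> Aff n \<and> aff_id n \<in> \<Gamma> \<and>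
     (\<forall>g\<in>\<Gamma>. \<forall>h\<in>\<Gamma>. g \<circ> h \<in> \<Gamma>) \<and>
     (\<forall>g\<in>\<Gamma>. \<exists>h\<in>\<Gamma>. h \<circ> g = aff_id n \<and> g \<circ> h = aff_id n)"

definition orbit_of :: "('x \<Rightarrow> 'x) set \<Rightarrow> 'x \<Rightarrow> 'x set" where
  "orbit_of \<Gamma> x = (\<lambda>g. g x) ` \<Gamma>"

definition orbit_space :: "nat \<Rightarrow> (nat \<Rightarrow> real) set \<Rightarrow> ((nat \<Rightarrow> real) \<Rightarrow> (nat \<Rightarrow> real)) set
    \<Rightarrow> (nat \<Rightarrow> real) set dspace" where
  "orbit_space n V \<Gamma> = quotient_space (open_subset_space n V) (orbit_of \<Gamma>)"

definition quasifold_dim :: "nat \<Rightarrow> 'a dspace \<Rightarrow> bool" where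
  "quasifold_dim n S \<longleftrightarrow> diffeology S \<and> D_second_countable S \<and>
     (\<forall>x\<in>dcarrier S. \<exists>U \<Gamma> V. D_open S U \<and> x \<in> U \<and>
        countable \<Gamma> \<and> subgroup_Aff n \<Gamma> \<and> open_Rn n V \<and> (\<forall>g\<in>\<Gamma>. g ` V \<subseteq> V) \<and>
        diffeomorphic (subspace S U) (orbit_space n V \<Gamma>))"

definition quasifold :: "'a dspace \<Rightarrow> bool" where
  "quasifold S \<longleftrightarrow> (\<exists>n. quasifold_dim n S)"

definition smooth_real_fun :: "(real \<Rightarrow> real) \<Rightarrow> bool" where
  "smooth_real_fun h \<longleftrightarrow> (\<forall>k x. ((deriv ^^ k) h) differentiable (at x))"

definition flat_at :: "(real \<Rightarrow> real) \<Rightarrow> real \<Rightarrow> bool" where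
  "flat_at h a \<longleftrightarrow> (\<forall>k. (deriv ^^ k) h a = 0)"

definition integral_curve :: "(real \<Rightarrow> real) \<Rightarrow> (real \<Rightarrow> real) \<Rightarrow> bool" where
  "integral_curve h \<gamma> \<longleftrightarrow> (\<forall>t. (\<gamma> has_real_derivative h (\<gamma> t)) (at t))"

definition complete_vf :: "(real \<Rightarrow> real) \<Rightarrow> bool" where
  "complete_vf h \<longleftrightarrow> (\<forall>x. \<exists>\<gamma>. \<gamma> 0 = x \<and> integral_curve h \<gamma>)"

definition time_one_flow :: "(real \<Rightarrow> real) \<Rightarrow> (real \<Rightarrow> real) \<Rightarrow> bool" where
  "time_one_flow h \<psi> \<longleftrightarrow> (\<forall>x \<gamma>. \<gamma> 0 = x \<and> integral_curve h \<gamma> \<longrightarrow> \<psi> x = \<gamma> 1)"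

definition Z_orbit :: "(real \<Rightarrow> real) \<Rightarrow> real \<Rightarrow> real set" where
  "Z_orbit \<psi> x = {y. \<exists>k. y = (\<psi> ^^ k) x \<or> x = (\<psi> ^^ k) y}"

end

(*
  Near 0 the quotient is governed by the flow line traj of h d/dx through 1: for y > 0, in the
  time coordinate s = inv traj y the map psi is the shift s |-> s + 1, while the class of 0 is a
  single point.  As h(0) = h'(0) = 0, the logarithmic derivative h(traj s) / traj s tends to 0
  as s -> -infinity, so every orbit map y |-> traj (inv traj y + k) is tangent to the identity
  at 0+.

  Suppose a D-open U containing the class of 0 were diffeomorphic to V/Gamma.  In dimension 0,
  U would be a single point.  In dimension n >= 2, a local lift to R of the inverse chart is a
  continuous function on an open subset of R^n whose fibres lie in Gamma-orbits and are
  therefore countable; this is impossible, since a countable level set cannot disconnect a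
  ball.  In dimension 1, lifting both chart maps gives C^1 germs g at 0 and f at v = g 0 with
  f o g related to the identity by the psi-action, whence f'(v) g'(0) = 1.  The uncountably
  many pairs (t, psi t) near 0 are matched by g with only countably many affine maps in Gamma,
  so one of them, x |-> a x + b, matches two such pairs.  It is not the identity, its slope is
  bounded, and it moves v so little that it must fix v.  Along this map f is invariant up to
  psi, and comparing derivatives at v gives a = 1, a contradiction.
*)
theory Submission
  imports Defs
begin

lemma gronwall_positive_forward:
  fixes q q' :: "real \<Rightarrow> real"
  assumes "s0 \<le> s"
    and q_deriv: "\<And>x. (q has_real_derivative q' x) (at x)"
    and lower: "\<And>x. s0 \<le> x \<Longrightarrow> x \<le> s \<Longrightarrow> - K * q x \<le> q' x"
    and "0 < q s0"
  shows "0 < q s"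
proof -
  have "exp (K * s0) * q s0 \<le> exp (K * s) * q s"
  proof (rule DERIV_nonneg_imp_nondecreasing[OF \<open>s0 \<le> s\<close>])
    fix x assume x: "s0 \<le> x" "x \<le> s"
    have "((\<lambda>x. exp (K * x) * q x) has_real_derivative exp (K * x) * (q' x + K * q x)) (at x)"
      by (auto intro!: derivative_eq_intros q_deriv simp: algebra_simps)
    moreover have "0 \<le> exp (K * x) * (q' x + K * q x)"
      using lower[OF x] by simp
    ultimately show "\<exists>y. ((\<lambda>x. exp (K * x) * q x) has_real_derivative y) (at x) \<and> 0 \<le> y"
      by blast
  qed
  moreover have "0 < exp (K * s0) * q s0" using \<open>0 < q s0\<close> by simp
  ultimately have "0 < exp (K * s) * q s" by linarith
  then show ?thesis by (simp add: zero_less_mult_iff)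
qed

lemma gronwall_positive:
  fixes q q' :: "real \<Rightarrow> real"
  assumes q_deriv: "\<And>x. (q has_real_derivative q' x) (at x)"
    and bound: "\<And>x. min s0 s \<le> x \<Longrightarrow> x \<le> max s0 s \<Longrightarrow> \<bar>q' x\<bar> \<le> K * q x"
    and "0 < q s0"
  shows "0 < q s"
proof (cases "s0 \<le> s")
  case True
  show ?thesis
    by (rule gronwall_positive_forward[OF True q_deriv, of K])
      (use bound True \<open>0 < q s0\<close> in \<open>force simp: abs_le_iff\<close>)+
next
  case False
  have "0 < q (- (- s))"
  proof (rule gronwall_positive_forward[of "- s0" "- s" "\<lambda>x. q (- x)" "\<lambda>x. - q' (- x)" K])
    show "((\<lambda>x. q (- x)) has_real_derivative - q' (- x)) (at x)" for x
    proof -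
      have "((\<lambda>x. - x) has_real_derivative - 1) (at x)" by (auto intro!: derivative_eq_intros)
      from DERIV_chain2[OF q_deriv this] show ?thesis by simp
    qed
    show "- K * q (- x) \<le> - q' (- x)" if "- s0 \<le> x" "x \<le> - s" for x
      using bound[of "- x"] that False by (auto simp: abs_le_iff)
  qed (use False \<open>0 < q s0\<close> in auto)
  then show ?thesis by simp
qed

lemma range_shift_int:
  "range (\<lambda>k::int. f (a + 1 + of_int k) :: real) = range (\<lambda>k::int. f (a + of_int k))"
proof (intro equalityI subsetI)
  fix y assume "y \<in> range (\<lambda>k::int. f (a + 1 + of_int k))"
  then obtain k :: int where "y = f (a + of_int (k + 1))" by (auto simp: ac_simps)
  then show "y \<in> range (\<lambda>k::int. f (a + of_int k))" by (rule range_eqI)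
next
  fix y assume "y \<in> range (\<lambda>k::int. f (a + of_int k))"
  then obtain k :: int where "y = f (a + 1 + of_int (k - 1))" by auto
  then show "y \<in> range (\<lambda>k::int. f (a + 1 + of_int k))" by (rule range_eqI)
qed

definition C1_near :: "(real \<Rightarrow> real) \<Rightarrow> real \<Rightarrow> real \<Rightarrow> bool" where
  "C1_near f a r \<longleftrightarrow> 0 < r \<and> (\<forall>x. \<bar>x - a\<bar> < r \<longrightarrow> f differentiable (at x)) \<and> isCont (deriv f) a"

lemma C1_near_deriv: "C1_near f a r \<Longrightarrow> \<bar>x - a\<bar> < r \<Longrightarrow> (f has_real_derivative deriv f x) (at x)"
  unfolding C1_near_def by (simp add: DERIV_deriv_iff_real_differentiable)

lemma C1_near_deriv_linear:
  assumes "C1_near f v r" "\<bar>c * w\<bar> < r"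
  shows "((\<lambda>w. f (v + c * w)) has_real_derivative deriv f (v + c * w) * c) (at w)"
proof -
  have "((\<lambda>w. v + c * w) has_real_derivative c) (at w)" by (auto intro!: derivative_eq_intros)
  from DERIV_chain2[OF C1_near_deriv[OF assms(1)] this] show ?thesis using assms(2) by simp
qed

lemma C1_near_bilipschitz:
  assumes f: "C1_near f a r" and "deriv f a \<noteq> 0"
  obtains \<rho> m K where "0 < \<rho>" "\<rho> \<le> r" "0 < m"
    "\<And>x y. \<bar>x - a\<bar> < \<rho> \<Longrightarrow> \<bar>y - a\<bar> < \<rho> \<Longrightarrow> m * \<bar>y - x\<bar> \<le> \<bar>f y - f x\<bar> \<and> \<bar>f y - f x\<bar> \<le> K * \<bar>y - x\<bar>"
proof -
  let ?m = "\<bar>deriv f a\<bar> / 2" and ?K = "2 * \<bar>deriv f a\<bar>"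
  obtain d where "0 < d" and d: "\<And>x. \<bar>x - a\<bar> < d \<Longrightarrow> \<bar>deriv f x - deriv f a\<bar> < ?m"
    using f \<open>deriv f a \<noteq> 0\<close> unfolding C1_near_def continuous_at_eps_delta
    by (metis dist_real_def zero_less_abs_iff half_gt_zero)
  define \<rho> where "\<rho> = min d r"
  have ordered: "?m * (y - x) \<le> \<bar>f y - f x\<bar> \<and> \<bar>f y - f x\<bar> \<le> ?K * (y - x)"
    if "\<bar>x - a\<bar> < \<rho>" "\<bar>y - a\<bar> < \<rho>" "x < y" for x y
  proof -
    have ball: "\<bar>z - a\<bar> < \<rho>" if "x \<le> z" "z \<le> y" for z
      using that \<open>\<bar>x - a\<bar> < \<rho>\<close> \<open>\<bar>y - a\<bar> < \<rho>\<close> by (auto simp: abs_less_iff)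
    obtain z where z: "x < z" "z < y" "f y - f x = (y - x) * deriv f z"
      using MVT2[OF \<open>x < y\<close>, of f "deriv f"] C1_near_deriv[OF f] ball \<rho>_def by force
    have "\<bar>deriv f z - deriv f a\<bar> < ?m" using d[of z] ball[of z] z by (simp add: \<rho>_def)
    then have "?m \<le> \<bar>deriv f z\<bar>" "\<bar>deriv f z\<bar> \<le> ?K" by arith+
    then show ?thesis using z \<open>x < y\<close> by (simp add: abs_mult mult_left_mono mult.commute)
  qed
  have "?m * \<bar>y - x\<bar> \<le> \<bar>f y - f x\<bar> \<and> \<bar>f y - f x\<bar> \<le> ?K * \<bar>y - x\<bar>"
    if "\<bar>x - a\<bar> < \<rho>" "\<bar>y - a\<bar> < \<rho>" for x y
    using ordered[OF that] ordered[OF that(2,1)] by (cases x y rule: linorder_cases) (auto simp: abs_minus_commute)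
  moreover have "0 < \<rho>" "\<rho> \<le> r" "0 < ?m"
    using \<open>0 < d\<close> f \<open>deriv f a \<noteq> 0\<close> by (auto simp: \<rho>_def C1_near_def)
  ultimately show thesis using that by blast
qed

lemma difference_quotient_at_right_0:
  assumes "(a has_real_derivative A) (at 0)" "a 0 = 0"
  shows "((\<lambda>t. a t / t) \<longlongrightarrow> A) (at_right 0)"
proof -
  have "((\<lambda>t. (a t - a 0) / (t - 0)) \<longlongrightarrow> A) (at 0)"
    using assms(1) by (simp add: has_field_derivative_iff)
  then show ?thesis using assms(2) by (simp add: filterlim_at_split)
qed

lemma interval_pigeonhole:
  fixes P :: "real \<Rightarrow> 'a \<Rightarrow> bool"
  assumes "a < b" "countable M" and choice: "\<And>t. a < t \<Longrightarrow> t < b \<Longrightarrow> \<exists>p\<in>M. P t p"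
  obtains s t p where "a < s" "s < t" "t < b" "p \<in> M" "P s p" "P t p"
proof -
  obtain C where C: "\<And>t. t \<in> {a<..<b} \<Longrightarrow> C t \<in> M \<and> P t (C t)"
    using bchoice[of "{a<..<b}" "\<lambda>t p. p \<in> M \<and> P t p"] choice by force
  then have "countable (C ` {a<..<b})" using \<open>countable M\<close> by (blast intro: countable_subset)
  then have "\<not> inj_on C {a<..<b}"
    using countable_image_inj_on uncountable_open_interval \<open>a < b\<close> by blast
  then obtain s t where "s \<in> {a<..<b}" "t \<in> {a<..<b}" "s \<noteq> t" "C s = C t"
    unfolding inj_on_def by blast
  then show thesis
  proof (cases "s < t")
    case True
    then show thesis using that[of s t "C s"] C[of s] C[of t] \<open>C s = C t\<close> \<open>s \<in> {a<..<b}\<close> \<open>t \<in> {a<..<b}\<close> by auto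
  next
    case False
    then have "t < s" using \<open>s \<noteq> t\<close> by simp
    then show thesis using that[of t s "C t"] C[of s] C[of t] \<open>C s = C t\<close> \<open>s \<in> {a<..<b}\<close> \<open>t \<in> {a<..<b}\<close> by auto
  qed
qed

lemma affine_conjugacy_slope_bound:
  fixes g p :: "real \<Rightarrow> real"
  assumes bilip: "\<And>x y. \<bar>x\<bar> < \<rho> \<Longrightarrow> \<bar>y\<bar> < \<rho> \<Longrightarrow> m * \<bar>y - x\<bar> \<le> \<bar>g y - g x\<bar> \<and> \<bar>g y - g x\<bar> \<le> K * \<bar>y - x\<bar>"
    and "0 < m" "s \<noteq> t" "\<bar>s\<bar> < \<rho>" "\<bar>t\<bar> < \<rho>" "\<bar>p s\<bar> < \<rho>" "\<bar>p t\<bar> < \<rho>"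
    and "g (p s) = \<alpha> * g s + \<beta>" "g (p t) = \<alpha> * g t + \<beta>"
    and p_lip: "\<bar>p t - p s\<bar> \<le> B * \<bar>t - s\<bar>"
  shows "\<bar>\<alpha>\<bar> \<le> K * B / m"
proof -
  have "0 < \<bar>t - s\<bar>" using \<open>s \<noteq> t\<close> by simp
  have "m * \<bar>t - s\<bar> \<le> K * \<bar>t - s\<bar>" using bilip[of s t] assms(4,5) by simp
  then have "0 \<le> K" using \<open>0 < m\<close> \<open>0 < \<bar>t - s\<bar>\<close> by simp
  have "\<bar>\<alpha>\<bar> * (m * \<bar>t - s\<bar>) \<le> \<bar>\<alpha>\<bar> * \<bar>g t - g s\<bar>"
    using bilip[of s t] assms(4,5) by (simp add: mult_left_mono)
  also have "\<dots> = \<bar>g (p t) - g (p s)\<bar>" using assms(8,9) by (simp add: abs_mult[symmetric] algebra_simps)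
  also have "\<dots> \<le> K * \<bar>p t - p s\<bar>" using bilip[of "p s" "p t"] assms(6,7) by simp
  also have "\<dots> \<le> K * (B * \<bar>t - s\<bar>)" using p_lip \<open>0 \<le> K\<close> by (rule mult_left_mono)
  finally have "(\<bar>\<alpha>\<bar> * m) * \<bar>t - s\<bar> \<le> (K * B) * \<bar>t - s\<bar>" by (simp add: ac_simps)
  then have "\<bar>\<alpha>\<bar> * m \<le> K * B" using \<open>0 < \<bar>t - s\<bar>\<close> by (simp add: mult_le_cancel_right_pos)
  then show ?thesis using \<open>0 < m\<close> by (simp add: pos_le_divide_eq)
qed

lemma affine_relation_near_base_point:
  fixes g p :: "real \<Rightarrow> real"
  assumes bilip: "\<And>x y. \<bar>x\<bar> < \<rho> \<Longrightarrow> \<bar>y\<bar> < \<rho> \<Longrightarrow> m * \<bar>y - x\<bar> \<le> \<bar>g y - g x\<bar> \<and> \<bar>g y - g x\<bar> \<le> K * \<bar>y - x\<bar>"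
    and "0 < m" "0 \<le> K" "g 0 = v" "0 < t" "t < p t" "p t < \<rho>"
    and rel: "g (p t) = \<alpha> * g t + \<beta>" and "\<bar>\<alpha>\<bar> \<le> \<Lambda>"
  shows "(\<alpha>, \<beta>) \<noteq> (1, 0)" "\<bar>\<alpha> * v + \<beta> - v\<bar> \<le> K * p t + \<Lambda> * (K * t)"
proof
  assume "(\<alpha>, \<beta>) = (1, 0)"
  then have "m * (p t - t) \<le> 0" using rel bilip[of t "p t"] assms(5-7) by simp
  then show False using \<open>t < p t\<close> \<open>0 < m\<close> by (simp add: mult_le_0_iff)
next
  have "\<alpha> * v + \<beta> - v = (g (p t) - g 0) - \<alpha> * (g t - g 0)" using rel \<open>g 0 = v\<close> by (simp add: algebra_simps)
  also have "\<bar>\<dots>\<bar> \<le> \<bar>g (p t) - g 0\<bar> + \<bar>\<alpha>\<bar> * \<bar>g t - g 0\<bar>" by (simp add: abs_mult[symmetric] abs_triangle_ineq4)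
  also have "\<dots> \<le> K * p t + \<Lambda> * (K * t)"
    using bilip[of 0 "p t"] bilip[of 0 t] assms(3,5-7,9) by (intro add_mono mult_mono) auto
  finally show "\<bar>\<alpha> * v + \<beta> - v\<bar> \<le> K * p t + \<Lambda> * (K * t)" .
qed

section \<open>Smooth maps on open subsets of \<open>R\<^sup>n\<close>\<close>

lemma open_Rn_subset: "open_Rn n W \<Longrightarrow> W \<subseteq> Rn n"
  unfolding open_Rn_def by blast

lemma fun_upd_in_Rn: "x \<in> Rn n \<Longrightarrow> i < n \<Longrightarrow> x(i := a) \<in> Rn n"
  unfolding Rn_def by auto

lemma dist_Rn_fun_upd: "i < n \<Longrightarrow> dist_Rn n (x(i := a)) (x(i := b)) = \<bar>a - b\<bar>"
proof -
  assume "i < n"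
  have "(\<Sum>j<n. ((x(i := a)) j - (x(i := b)) j)\<^sup>2) = (\<Sum>j<n. if j = i then (a - b)\<^sup>2 else 0)"
    by (rule sum.cong) auto
  also have "\<dots> = (a - b)\<^sup>2" using \<open>i < n\<close> by simp
  finally show ?thesis unfolding dist_Rn_def by simp
qed

lemma open_line_section:
  assumes W: "open_Rn n W" and "x \<in> W" "i < n"
  shows "open {t. x(i := x i + t) \<in> W}"
  unfolding open_dist
proof (intro ballI)
  fix t assume "t \<in> {t. x(i := x i + t) \<in> W}"
  then obtain e where "0 < e" and e: "\<And>y. y \<in> Rn n \<Longrightarrow> dist_Rn n (x(i := x i + t)) y < e \<Longrightarrow> y \<in> W"
    using W unfolding open_Rn_def by blast
  have "x \<in> Rn n" using W \<open>x \<in> W\<close> open_Rn_subset by blast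
  show "\<exists>e>0. \<forall>s. dist s t < e \<longrightarrow> s \<in> {t. x(i := x i + t) \<in> W}"
    using \<open>0 < e\<close> e[OF fun_upd_in_Rn[OF \<open>x \<in> Rn n\<close> \<open>i < n\<close>]] dist_Rn_fun_upd[OF \<open>i < n\<close>]
    by (auto simp: dist_real_def abs_minus_commute)
qed

lemma has_partial_iff:
  assumes "open_Rn n W" "x \<in> W" "i < n"
  shows "has_partial n W g i x D \<longleftrightarrow> ((\<lambda>t. g (x(i := x i + t))) has_real_derivative D) (at 0)"
proof -
  have "at (0::real) within {t. x(i := x i + t) \<in> W} = at 0"
    using assms by (intro at_within_open open_line_section) simp_all
  then show ?thesis unfolding has_partial_def by simp
qed

lemma partial_eqI:
  assumes "open_Rn n W" "x \<in> W" "i < n" and "has_partial n W g i x D"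
  shows "partial n W g i x = D"
proof -
  have "D' = D" if "has_partial n W g i x D'" for D'
    using DERIV_unique that assms(4) unfolding has_partial_iff[OF assms(1-3)] by blast
  then show ?thesis unfolding partial_def using assms(4) by blast
qed

lemma has_partial_cong:
  "x \<in> W \<Longrightarrow> \<forall>y\<in>W. g y = g' y \<Longrightarrow> has_partial n W g i x D \<longleftrightarrow> has_partial n W g' i x D"
  unfolding has_partial_def by (rule has_field_derivative_cong_ev) auto

lemma Ck_cong: "\<forall>y\<in>W. g y = g' y \<Longrightarrow> Ck n k W g \<longleftrightarrow> Ck n k W g'"
proof (induction k arbitrary: g g')
  case 0
  then show ?case by (simp add: cont_Rn_def)
next
  case (Suc k)
  have hp_eq: "has_partial n W g i x = has_partial n W g' i x" if "x \<in> W" for i x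
    using has_partial_cong[OF that Suc.prems] by blast
  then have "\<forall>x\<in>W. partial n W g i x = partial n W g' i x" for i
    unfolding partial_def by simp
  then have "Ck n k W (partial n W g i) \<longleftrightarrow> Ck n k W (partial n W g' i)" for i
    by (rule Suc.IH)
  moreover have "cont_Rn n W g \<longleftrightarrow> cont_Rn n W g'" using Suc.prems by (simp add: cont_Rn_def)
  ultimately show ?case using hp_eq by simp
qed

lemma Ck_const: "open_Rn n W \<Longrightarrow> Ck n k W (\<lambda>_. a)"
proof (induction k arbitrary: a)
  case 0
  then show ?case by (simp add: cont_Rn_def)
next
  case (Suc k)
  have hp: "has_partial n W (\<lambda>_. a) i x 0" if "x \<in> W" "i < n" for i x
    using has_partial_iff[OF Suc.prems that] by simp
  have "Ck n k W (partial n W (\<lambda>_. a) i)" if "i < n" for i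
  proof -
    have "\<forall>y\<in>W. partial n W (\<lambda>_. a) i y = 0" using partial_eqI[OF Suc.prems _ that hp] that by blast
    from Ck_cong[OF this] show ?thesis using Suc.IH[OF Suc.prems, of 0] by simp
  qed
  then show ?case using hp by (auto simp: cont_Rn_def)
qed

lemma Ck_coord:
  assumes W: "open_Rn n W" and "j < n"
  shows "Ck n k W (\<lambda>x. x j)"
proof -
  have cont: "cont_Rn n W (\<lambda>x. x j)"
    unfolding cont_Rn_def
  proof (intro ballI allI impI exI conjI)
    fix x y e assume "(0::real) < e" "dist_Rn n x y < e"
    moreover have "(x j - y j)\<^sup>2 \<le> (\<Sum>i<n. (x i - y i)\<^sup>2)"
      using \<open>j < n\<close> by (intro member_le_sum) auto
    then have "sqrt ((x j - y j)\<^sup>2) \<le> dist_Rn n x y" unfolding dist_Rn_def by (rule real_sqrt_le_mono)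
    ultimately show "\<bar>y j - x j\<bar> < e" by (simp add: abs_minus_commute)
  qed
  show ?thesis
  proof (cases k)
    case (Suc k')
    have hp: "has_partial n W (\<lambda>x. x j) i x (if i = j then 1 else 0)" if "x \<in> W" "i < n" for i x
      using has_partial_iff[OF W that] by (cases "i = j") (auto intro!: derivative_eq_intros)
    have "Ck n k' W (partial n W (\<lambda>x. x j) i)" if "i < n" for i
    proof -
      have "\<forall>y\<in>W. partial n W (\<lambda>x. x j) i y = (if i = j then 1 else 0)"
        using partial_eqI[OF W _ that hp] that by blast
      from Ck_cong[OF this] show ?thesis using Ck_const[OF W] by simp
    qed
    then show ?thesis using Suc hp cont by auto
  qed (simp add: cont)
qed

lemma smooth_scalar_coord: "open_Rn n W \<Longrightarrow> j < n \<Longrightarrow> smooth_scalar n W (\<lambda>x. x j)"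
  unfolding smooth_scalar_def using Ck_coord by blast

lemma smooth_Rn_id: "open_Rn n W \<Longrightarrow> smooth_Rn n n W (\<lambda>x. x)"
  unfolding smooth_Rn_def using smooth_scalar_coord open_Rn_subset by fastforce

lemma smooth_scalar_imp_cont_Rn: "smooth_scalar n W g \<Longrightarrow> cont_Rn n W g"
  unfolding smooth_scalar_def by (metis Ck.simps(1))

definition R1_point :: "real \<Rightarrow> nat \<Rightarrow> real" where
  "R1_point u = (\<lambda>i. if i = 0 then u else 0)"

lemma R1_point_in_Rn: "R1_point u \<in> Rn 1"
  unfolding R1_point_def Rn_def by auto

lemma Rn_1_eq_R1_point: "x \<in> Rn 1 \<Longrightarrow> x = R1_point (x 0)"
  unfolding R1_point_def Rn_def by auto

lemma R1_point_apply_0 [simp]: "R1_point u 0 = u"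
  unfolding R1_point_def by simp

lemma R1_point_inject [simp]: "R1_point u = R1_point v \<longleftrightarrow> u = v"
  by (metis R1_point_apply_0)

lemma R1_point_upd [simp]: "(R1_point u)(0 := a) = R1_point a"
  unfolding R1_point_def by auto

lemma dist_Rn_R1_point: "dist_Rn 1 (R1_point u) (R1_point v) = \<bar>u - v\<bar>"
  unfolding dist_Rn_def R1_point_def by simp

lemma open_R1_section: "open_Rn 1 W \<Longrightarrow> open {u. R1_point u \<in> W}"
  unfolding open_dist
proof (intro ballI)
  fix u assume "open_Rn 1 W" "u \<in> {u. R1_point u \<in> W}"
  then obtain e where "0 < e" "\<forall>y\<in>Rn 1. dist_Rn 1 (R1_point u) y < e \<longrightarrow> y \<in> W"
    unfolding open_Rn_def by auto
  then show "\<exists>e>0. \<forall>v. dist v u < e \<longrightarrow> v \<in> {u. R1_point u \<in> W}"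
    using R1_point_in_Rn dist_Rn_R1_point
    by (intro exI[of _ e]) (auto simp: dist_real_def abs_minus_commute)
qed

lemma continuous_on_R1_section:
  assumes "cont_Rn 1 W p"
  shows "continuous_on {u. R1_point u \<in> W} (\<lambda>u. p (R1_point u))"
  unfolding continuous_on_iff
proof (intro ballI allI impI)
  fix u e assume "u \<in> {u. R1_point u \<in> W}" "(0::real) < e"
  then obtain d where "0 < d" and d: "\<forall>y\<in>W. dist_Rn 1 (R1_point u) y < d \<longrightarrow> \<bar>p y - p (R1_point u)\<bar> < e"
    using assms unfolding cont_Rn_def by force
  show "\<exists>d>0. \<forall>u'\<in>{u. R1_point u \<in> W}. dist u' u < d \<longrightarrow> dist (p (R1_point u')) (p (R1_point u)) < e"
  proof (intro exI[of _ d] conjI ballI impI)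
    fix u' assume "u' \<in> {u. R1_point u \<in> W}" "dist u' u < d"
    moreover have "dist_Rn 1 (R1_point u) (R1_point u') = dist u' u"
      unfolding dist_real_def dist_Rn_R1_point by (rule abs_minus_commute)
    ultimately show "dist (p (R1_point u')) (p (R1_point u)) < e" using d by (simp add: dist_real_def)
  qed (rule \<open>0 < d\<close>)
qed

lemma smooth_scalar_1_C1_near:
  assumes W: "open_Rn 1 W" and q: "smooth_scalar 1 W q" and "R1_point a \<in> W"
  obtains r where "C1_near (\<lambda>u. q (R1_point u)) a r" "\<And>u. \<bar>u - a\<bar> < r \<Longrightarrow> R1_point u \<in> W"
proof -
  let ?W1 = "{u. R1_point u \<in> W}" and ?D = "\<lambda>u. partial 1 W q 0 (R1_point u)"
  have "open ?W1" using W by (rule open_R1_section)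
  then obtain r where "0 < r" and r: "\<And>u. \<bar>u - a\<bar> < r \<Longrightarrow> R1_point u \<in> W"
    using \<open>R1_point a \<in> W\<close> unfolding open_dist by (force simp: dist_real_def)
  have C2: "Ck 1 (Suc (Suc 0)) W q" using q unfolding smooth_scalar_def by blast
  have deriv: "((\<lambda>u. q (R1_point u)) has_real_derivative ?D u) (at u)" if u: "u \<in> ?W1" for u
  proof -
    obtain D where D: "has_partial 1 W q 0 (R1_point u) D" using C2 u by auto
    then have "((\<lambda>t. q (R1_point (u + t))) has_real_derivative D) (at 0)"
      using has_partial_iff[OF W, of "R1_point u" 0 q D] u by simp
    then have "((\<lambda>u. q (R1_point u)) has_real_derivative D) (at u)"
      using DERIV_shift[where f = "\<lambda>u. q (R1_point u)" and x = 0 and z = u] by (simp add: add.commute)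
    then show ?thesis using partial_eqI[OF W _ _ D] u by simp
  qed
  have "continuous_on ?W1 ?D"
    using C2 by (intro continuous_on_R1_section) simp
  then have "isCont ?D a"
    using continuous_on_eq_continuous_at[OF \<open>open ?W1\<close>] \<open>R1_point a \<in> W\<close> by blast
  moreover have "\<forall>\<^sub>F u in nhds a. deriv (\<lambda>u. q (R1_point u)) u = ?D u"
    using \<open>open ?W1\<close> \<open>R1_point a \<in> W\<close> deriv DERIV_imp_deriv unfolding eventually_nhds by blast
  ultimately have "isCont (deriv (\<lambda>u. q (R1_point u))) a" by (simp add: isCont_cong)
  then have "C1_near (\<lambda>u. q (R1_point u)) a r"
    unfolding C1_near_def using \<open>0 < r\<close> r deriv real_differentiable_def by blast
  then show thesis using that r by blast
qed

text \<open>A level set through a value strictly between two others would have to disconnect the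
  domain, but removing a countable set does not disconnect an open connected set in dimension
  at least 2.\<close>
lemma continuous_countable_fibres_imp_False:
  fixes f :: "'a::euclidean_space \<Rightarrow> real"
  assumes "2 \<le> DIM('a)" "open S" "connected S" "S \<noteq> {}" "continuous_on S f"
    and fibres: "\<And>y. countable {x\<in>S. f x = y}"
  shows False
proof -
  obtain a where "a \<in> S" using \<open>S \<noteq> {}\<close> by blast
  then obtain r where "0 < r" "ball a r \<subseteq> S" using \<open>open S\<close> open_contains_ball by blast
  then have "uncountable S" using uncountable_ball[OF \<open>0 < r\<close>] countable_subset by blast
  have "S \<noteq> {x\<in>S. f x = f a}"
  proof
    assume "S = {x\<in>S. f x = f a}"
    then show False using fibres[of "f a"] \<open>uncountable S\<close> by simp
  qed
  then obtain b where "b \<in> S" "f b \<noteq> f a" by blast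
  define c where "c = (f a + f b) / 2"
  let ?T = "{x\<in>S. f x = c}"
  have "connected (S - ?T)"
    by (rule connected_open_diff_countable) (use assms fibres[of c] in simp_all)
  then have "connected (f ` (S - ?T))"
    by (rule connected_continuous_image[OF continuous_on_subset[OF \<open>continuous_on S f\<close>], rotated]) auto
  moreover have "f a \<in> f ` (S - ?T)" "f b \<in> f ` (S - ?T)"
    using \<open>a \<in> S\<close> \<open>b \<in> S\<close> \<open>f b \<noteq> f a\<close> by (simp_all add: c_def image_iff) (auto simp: field_simps)
  moreover have "min (f a) (f b) \<le> c" "c \<le> max (f a) (f b)" by (auto simp: c_def)
  ultimately have "c \<in> f ` (S - ?T)"
    by (cases "f a \<le> f b") (auto intro: connectedD_interval)
  then show False by auto
qed

definition plane_through :: "(nat \<Rightarrow> real) \<Rightarrow> real \<times> real \<Rightarrow> nat \<Rightarrow> real" where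
  "plane_through x0 p = x0(0 := x0 0 + fst p, 1 := x0 1 + snd p)"

lemma plane_through_in_Rn: "x0 \<in> Rn n \<Longrightarrow> 2 \<le> n \<Longrightarrow> plane_through x0 p \<in> Rn n"
  unfolding plane_through_def Rn_def by auto

lemma inj_plane_through: "inj (plane_through x0)"
proof (rule injI)
  fix p q assume "plane_through x0 p = plane_through x0 q"
  then have "plane_through x0 p 0 = plane_through x0 q 0" "plane_through x0 p 1 = plane_through x0 q 1"
    by simp_all
  then show "p = q" by (simp add: plane_through_def prod_eq_iff)
qed

lemma dist_Rn_plane_through:
  assumes "2 \<le> n"
  shows "dist_Rn n (plane_through x0 p) (plane_through x0 q) = dist p q"
proof -
  let ?g = "\<lambda>j. (plane_through x0 p j - plane_through x0 q j)\<^sup>2"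
  have "(\<Sum>j<n. ?g j) = (\<Sum>j\<in>{0, 1}. ?g j)"
    by (rule sum.mono_neutral_right) (use assms in \<open>auto simp: plane_through_def\<close>)
  then show ?thesis
    by (simp add: dist_Rn_def plane_through_def dist_prod_def dist_real_def power2_commute)
qed

lemma continuous_on_plane_through:
  assumes "2 \<le> n" and f: "cont_Rn n W f" and sub: "plane_through x0 ` S \<subseteq> W"
  shows "continuous_on S (\<lambda>p. f (plane_through x0 p))"
  unfolding continuous_on_iff
proof (intro ballI allI impI)
  let ?P = "plane_through x0"
  fix p and \<epsilon> :: real assume "p \<in> S" "0 < \<epsilon>"
  then obtain d where "0 < d" and d: "\<forall>y\<in>W. dist_Rn n (?P p) y < d \<longrightarrow> \<bar>f y - f (?P p)\<bar> < \<epsilon>"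
    using f sub unfolding cont_Rn_def by blast
  show "\<exists>d>0. \<forall>q\<in>S. dist q p < d \<longrightarrow> dist (f (?P q)) (f (?P p)) < \<epsilon>"
  proof (intro exI[of _ d] conjI ballI impI)
    fix q assume "q \<in> S" "dist q p < d"
    then have "?P q \<in> W" "dist_Rn n (?P p) (?P q) < d"
      using sub dist_Rn_plane_through[OF \<open>2 \<le> n\<close>] by (auto simp: dist_commute)
    then show "dist (f (?P q)) (f (?P p)) < \<epsilon>" using d by (simp add: dist_real_def)
  qed (rule \<open>0 < d\<close>)
qed

lemma Rn_continuous_countable_fibres_imp_False:
  assumes W: "open_Rn n W" and "2 \<le> n" "x0 \<in> W" and f: "cont_Rn n W f"
    and fibres: "\<And>x. x \<in> W \<Longrightarrow> countable {x'\<in>W. f x' = f x}"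
  shows False
proof -
  let ?P = "plane_through x0"
  have "x0 \<in> Rn n" using W \<open>x0 \<in> W\<close> open_Rn_subset by blast
  obtain e where "0 < e" and e: "\<And>y. y \<in> Rn n \<Longrightarrow> dist_Rn n x0 y < e \<Longrightarrow> y \<in> W"
    using W \<open>x0 \<in> W\<close> unfolding open_Rn_def by blast
  have "?P 0 = x0" by (simp add: plane_through_def zero_prod_def)
  then have P_in: "?P ` ball 0 e \<subseteq> W"
    using e[OF plane_through_in_Rn[OF \<open>x0 \<in> Rn n\<close> \<open>2 \<le> n\<close>]] dist_Rn_plane_through[OF \<open>2 \<le> n\<close>, of x0 0]
    by auto
  show False
  proof (rule continuous_countable_fibres_imp_False[of "ball (0 :: real \<times> real) e" "\<lambda>p. f (?P p)"])
    show "countable {p \<in> ball 0 e. f (?P p) = y}" for y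
    proof (cases "\<exists>p\<in>ball 0 e. f (?P p) = y")
      case True
      then have "countable {x'\<in>W. f x' = y}" using fibres P_in by blast
      moreover have "?P ` {p \<in> ball 0 e. f (?P p) = y} \<subseteq> {x'\<in>W. f x' = y}" using P_in by auto
      ultimately have "countable (?P ` {p \<in> ball 0 e. f (?P p) = y})" by (rule countable_subset[rotated])
      then show ?thesis by (rule countable_image_inj_on) (rule inj_on_subset[OF inj_plane_through], simp)
    next
      case False
      then have "{p \<in> ball 0 e. f (?P p) = y} = {}" by blast
      then show ?thesis by (simp only: countable_empty)
    qed
  qed (use \<open>0 < e\<close> continuous_on_plane_through[OF \<open>2 \<le> n\<close> f P_in] in auto)
qed

section \<open>Orbit spaces of affine groups\<close>

lemma aff_id_apply: "x \<in> Rn n \<Longrightarrow> aff_id n x = x"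
proof -
  assume x: "x \<in> Rn n"
  have "aff_id n x i = x i" for i
  proof (cases "i < n")
    case True
    have "(\<Sum>j<n. (if i = j then 1 else 0) * x j) = (\<Sum>j<n. if j = i then x i else 0)"
      by (rule sum.cong) auto
    then show ?thesis using True unfolding aff_id_def aff_map_def by simp
  next
    case False
    then show ?thesis using x unfolding aff_id_def aff_map_def Rn_def by simp
  qed
  then show ?thesis by blast
qed

lemma orbit_of_refl: "subgroup_Aff n \<Gamma> \<Longrightarrow> x \<in> Rn n \<Longrightarrow> x \<in> orbit_of \<Gamma> x"
  unfolding orbit_of_def subgroup_Aff_def
  by (intro image_eqI[where x = "aff_id n"]) (simp_all add: aff_id_apply)

lemma orbit_of_eqD:
  "subgroup_Aff n \<Gamma> \<Longrightarrow> y \<in> Rn n \<Longrightarrow> orbit_of \<Gamma> x = orbit_of \<Gamma> y \<Longrightarrow> \<exists>\<gamma>\<in>\<Gamma>. y = \<gamma> x"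
  using orbit_of_refl[of n \<Gamma> y] unfolding orbit_of_def by auto

lemma orbit_of_apply:
  assumes G: "subgroup_Aff n \<Gamma>" and "\<gamma> \<in> \<Gamma>" "x \<in> Rn n"
  shows "orbit_of \<Gamma> (\<gamma> x) = orbit_of \<Gamma> x"
proof (intro equalityI subsetI)
  fix z assume "z \<in> orbit_of \<Gamma> (\<gamma> x)"
  then obtain \<gamma>' where "\<gamma>' \<in> \<Gamma>" "z = (\<gamma>' \<circ> \<gamma>) x" unfolding orbit_of_def by auto
  moreover have "\<gamma>' \<circ> \<gamma> \<in> \<Gamma>" using G \<open>\<gamma> \<in> \<Gamma>\<close> \<open>\<gamma>' \<in> \<Gamma>\<close> unfolding subgroup_Aff_def by blast
  ultimately show "z \<in> orbit_of \<Gamma> x" unfolding orbit_of_def by blast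
next
  fix z assume "z \<in> orbit_of \<Gamma> x"
  then obtain \<gamma>' where "\<gamma>' \<in> \<Gamma>" "z = \<gamma>' x" unfolding orbit_of_def by auto
  obtain \<kappa> where "\<kappa> \<in> \<Gamma>" "\<kappa> \<circ> \<gamma> = aff_id n" using G \<open>\<gamma> \<in> \<Gamma>\<close> unfolding subgroup_Aff_def by blast
  then have "(\<kappa> \<circ> \<gamma>) x = aff_id n x" by simp
  then have "\<kappa> (\<gamma> x) = x" using aff_id_apply[OF \<open>x \<in> Rn n\<close>] by simp
  then have "z = (\<gamma>' \<circ> \<kappa>) (\<gamma> x)" using \<open>z = \<gamma>' x\<close> by simp
  moreover have "\<gamma>' \<circ> \<kappa> \<in> \<Gamma>" using G \<open>\<gamma>' \<in> \<Gamma>\<close> \<open>\<kappa> \<in> \<Gamma>\<close> unfolding subgroup_Aff_def by blast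
  ultimately show "z \<in> orbit_of \<Gamma> (\<gamma> x)" unfolding orbit_of_def by blast
qed

definition affine_coeffs :: "((nat \<Rightarrow> real) \<Rightarrow> nat \<Rightarrow> real) \<Rightarrow> real \<times> real" where
  "affine_coeffs \<gamma> = (\<gamma> (R1_point 1) 0 - \<gamma> (R1_point 0) 0, \<gamma> (R1_point 0) 0)"

lemma Aff_1_apply:
  "\<gamma> \<in> Aff 1 \<Longrightarrow> \<gamma> (R1_point u) = R1_point (fst (affine_coeffs \<gamma>) * u + snd (affine_coeffs \<gamma>))"
  unfolding Aff_def affine_coeffs_def aff_map_def R1_point_def by (auto simp: fun_eq_iff)


lemma orbit_of_R1_affine_coeffs:
  assumes G: "subgroup_Aff 1 \<Gamma>" and "(\<alpha>, \<beta>) \<in> affine_coeffs ` \<Gamma>"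
  shows "orbit_of \<Gamma> (R1_point (\<alpha> * u + \<beta>)) = orbit_of \<Gamma> (R1_point u)"
proof -
  obtain \<gamma> where "\<gamma> \<in> \<Gamma>" "affine_coeffs \<gamma> = (\<alpha>, \<beta>)" using assms(2) by force
  moreover from this have "\<gamma> \<in> Aff 1" using G unfolding subgroup_Aff_def by blast
  ultimately have "\<gamma> (R1_point u) = R1_point (\<alpha> * u + \<beta>)" using Aff_1_apply by simp
  then show ?thesis using orbit_of_apply[OF G \<open>\<gamma> \<in> \<Gamma>\<close> R1_point_in_Rn, of u] by simp
qed

lemma orbit_of_R1_eqD:
  assumes G: "subgroup_Aff 1 \<Gamma>" and "orbit_of \<Gamma> (R1_point x) = orbit_of \<Gamma> (R1_point y)"
  shows "\<exists>(\<alpha>, \<beta>)\<in>affine_coeffs ` \<Gamma>. y = \<alpha> * x + \<beta>"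
proof -
  obtain \<gamma> where "\<gamma> \<in> \<Gamma>" "R1_point y = \<gamma> (R1_point x)"
    using orbit_of_eqD[OF G R1_point_in_Rn assms(2)] by blast
  moreover from this have "\<gamma> \<in> Aff 1" using G unfolding subgroup_Aff_def by blast
  ultimately have "y = fst (affine_coeffs \<gamma>) * x + snd (affine_coeffs \<gamma>)" using Aff_1_apply by simp
  then show ?thesis using \<open>\<gamma> \<in> \<Gamma>\<close> by force
qed

lemma dplots_quotient_real_space:
  "dplots (quotient_space real_space \<pi>) n U P \<longleftrightarrow> open_Rn n U \<and>
     (\<forall>r\<in>U. \<exists>W. open_Rn n W \<and> r \<in> W \<and> W \<subseteq> U \<and>
        (\<exists>q. smooth_scalar n W q \<and> (\<forall>s\<in>W. P s = \<pi> (q s))))"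
  by (simp add: quotient_space_def real_space_def) blast

lemma dplots_orbit_space:
  "dplots (orbit_space n V \<Gamma>) m U P \<longleftrightarrow> open_Rn m U \<and>
     (\<forall>r\<in>U. \<exists>W. open_Rn m W \<and> r \<in> W \<and> W \<subseteq> U \<and>
        (\<exists>q. smooth_Rn m n W q \<and> q ` W \<subseteq> V \<and> (\<forall>s\<in>W. P s = orbit_of \<Gamma> (q s))))"
  by (simp add: orbit_space_def quotient_space_def open_subset_space_def) blast

lemma dcarrier_orbit_space: "dcarrier (orbit_space n V \<Gamma>) = orbit_of \<Gamma> ` V"
  by (simp add: orbit_space_def quotient_space_def open_subset_space_def)

lemma dplots_subspace: "dplots (subspace S A) n U p \<longleftrightarrow> dplots S n U p \<and> p ` U \<subseteq> A"
  by (simp add: subspace_def)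

lemma dcarrier_subspace: "dcarrier (subspace S A) = A"
  by (simp add: subspace_def)

lemma orbit_space_plot_orbit_of: "open_Rn n V \<Longrightarrow> dplots (orbit_space n V \<Gamma>) n V (orbit_of \<Gamma>)"
  unfolding dplots_orbit_space using smooth_Rn_id by (auto intro!: exI[of _ V] exI[of _ "\<lambda>x. x"])

lemma quotient_real_space_plot_line:
  "open_Rn 1 W \<Longrightarrow> dplots (quotient_space real_space \<pi>) 1 W (\<lambda>x. \<pi> (x 0))"
  unfolding dplots_quotient_real_space using smooth_scalar_coord[of 1 W 0]
  by (auto intro!: exI[of _ W] exI[of _ "\<lambda>x. x 0"])

lemma open_Rn_Rn: "open_Rn n (Rn n)"
  unfolding open_Rn_def by (auto intro: exI[of _ 1])

lemma D_open_quotient_real_space: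
  "D_open (quotient_space real_space \<pi>) U \<Longrightarrow> open_Rn 1 {x \<in> Rn 1. \<pi> (x 0) \<in> U}"
  unfolding D_open_def using quotient_real_space_plot_line[OF open_Rn_Rn] by blast

lemma D_open_quotient_real_space_nbhd:
  assumes "D_open (quotient_space real_space \<pi>) U" "\<pi> a \<in> U"
  obtains e where "0 < e" "\<And>t. \<bar>t - a\<bar> < e \<Longrightarrow> \<pi> t \<in> U"
proof -
  have "R1_point a \<in> {x \<in> Rn 1. \<pi> (x 0) \<in> U}" using assms(2) R1_point_in_Rn by simp
  then obtain e where "0 < e" and e: "\<And>y. y \<in> Rn 1 \<Longrightarrow> dist_Rn 1 (R1_point a) y < e \<Longrightarrow> \<pi> (y 0) \<in> U"
    using D_open_quotient_real_space[OF assms(1)] unfolding open_Rn_def by blast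
  have "\<pi> t \<in> U" if "\<bar>t - a\<bar> < e" for t
  proof -
    have "dist_Rn 1 (R1_point a) (R1_point t) < e" using dist_Rn_R1_point[of a t] that by (simp add: abs_minus_commute)
    then show ?thesis using e[OF R1_point_in_Rn] by simp
  qed
  then show thesis using that \<open>0 < e\<close> by blast
qed

lemma quotient_real_space_plot_lift_1:
  assumes "dplots (quotient_space real_space \<pi>) 1 U P" "R1_point a \<in> U"
  obtains f r where "C1_near f a r" "\<And>u. \<bar>u - a\<bar> < r \<Longrightarrow> R1_point u \<in> U \<and> P (R1_point u) = \<pi> (f u)"
proof -
  obtain W q where W: "open_Rn 1 W" "R1_point a \<in> W" "W \<subseteq> U" and q: "smooth_scalar 1 W q"
    and P: "\<forall>s\<in>W. P s = \<pi> (q s)"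
    using assms unfolding dplots_quotient_real_space by blast
  obtain r where "C1_near (\<lambda>u. q (R1_point u)) a r" "\<And>u. \<bar>u - a\<bar> < r \<Longrightarrow> R1_point u \<in> W"
    using smooth_scalar_1_C1_near[OF W(1) q W(2)] by blast
  then show thesis using that W(3) P by blast
qed

lemma orbit_space_plot_lift_1:
  assumes "dplots (orbit_space 1 V \<Gamma>) 1 U P" "open_Rn 1 V" "R1_point a \<in> U"
  obtains g r where "C1_near g a r"
    "\<And>t. \<bar>t - a\<bar> < r \<Longrightarrow> R1_point t \<in> U \<and> R1_point (g t) \<in> V \<and> P (R1_point t) = orbit_of \<Gamma> (R1_point (g t))"
proof -
  obtain W q where W: "open_Rn 1 W" "R1_point a \<in> W" "W \<subseteq> U" and q: "smooth_Rn 1 1 W q" "q ` W \<subseteq> V"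
    and P: "\<forall>s\<in>W. P s = orbit_of \<Gamma> (q s)"
    using assms unfolding dplots_orbit_space by blast
  have q_in: "q s \<in> V" and q_eq: "q s = R1_point (q s 0)" if "s \<in> W" for s
    using Rn_1_eq_R1_point open_Rn_subset[OF \<open>open_Rn 1 V\<close>] q(2) that by blast+
  have "smooth_scalar 1 W (\<lambda>s. q s 0)" using q(1) unfolding smooth_Rn_def by simp
  then obtain r where "C1_near (\<lambda>t. q (R1_point t) 0) a r" "\<And>t. \<bar>t - a\<bar> < r \<Longrightarrow> R1_point t \<in> W"
    using smooth_scalar_1_C1_near[OF W(1) _ W(2)] by blast
  moreover have "R1_point t \<in> U \<and> R1_point (q (R1_point t) 0) \<in> V \<and> P (R1_point t) = orbit_of \<Gamma> (R1_point (q (R1_point t) 0))"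
    if "R1_point t \<in> W" for t
    using that W(3) P q_in[OF that] q_eq[OF that] by auto
  ultimately show thesis using that by blast
qed

lemma dsmooth_quotient_real_space_lift_1:
  assumes "D_open (quotient_space real_space \<pi>) U" "\<pi> a \<in> U" "open_Rn 1 V"
    and F: "dsmooth (subspace (quotient_space real_space \<pi>) U) (orbit_space 1 V \<Gamma>) F"
  obtains g r where "C1_near g a r"
    "\<And>t. \<bar>t - a\<bar> < r \<Longrightarrow> \<pi> t \<in> U \<and> R1_point (g t) \<in> V \<and> F (\<pi> t) = orbit_of \<Gamma> (R1_point (g t))"
proof -
  let ?W = "{x \<in> Rn 1. \<pi> (x 0) \<in> U}"
  have "R1_point a \<in> ?W" using assms(2) R1_point_in_Rn by simp
  have "dplots (subspace (quotient_space real_space \<pi>) U) 1 ?W (\<lambda>x. \<pi> (x 0))"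
    unfolding dplots_subspace
    using quotient_real_space_plot_line[OF D_open_quotient_real_space[OF assms(1)]] by auto
  then have "dplots (orbit_space 1 V \<Gamma>) 1 ?W (F \<circ> (\<lambda>x. \<pi> (x 0)))"
    using F unfolding dsmooth_def by blast
  from orbit_space_plot_lift_1[OF this \<open>open_Rn 1 V\<close> \<open>R1_point a \<in> ?W\<close>]
  obtain g r where "C1_near g a r" and lift: "\<And>t. \<bar>t - a\<bar> < r \<Longrightarrow> R1_point t \<in> ?W \<and>
      R1_point (g t) \<in> V \<and> (F \<circ> (\<lambda>x. \<pi> (x 0))) (R1_point t) = orbit_of \<Gamma> (R1_point (g t))" by blast
  show thesis
    by (rule that[OF \<open>C1_near g a r\<close>]) (use lift in simp)
qed

lemma dsmooth_orbit_space_lift_1: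
  assumes G: "dsmooth (orbit_space 1 V \<Gamma>) (subspace (quotient_space real_space \<pi>) U) G"
    and "open_Rn 1 V" "R1_point v \<in> V"
  obtains f r where "C1_near f v r" "\<And>u. \<bar>u - v\<bar> < r \<Longrightarrow> G (orbit_of \<Gamma> (R1_point u)) = \<pi> (f u)"
proof -
  have "dplots (quotient_space real_space \<pi>) 1 V (G \<circ> orbit_of \<Gamma>)"
    using G orbit_space_plot_orbit_of[OF \<open>open_Rn 1 V\<close>] unfolding dsmooth_def dplots_subspace by blast
  from quotient_real_space_plot_lift_1[OF this \<open>R1_point v \<in> V\<close>]
  obtain f r where "C1_near f v r"
    and lift: "\<And>u. \<bar>u - v\<bar> < r \<Longrightarrow> R1_point u \<in> V \<and> (G \<circ> orbit_of \<Gamma>) (R1_point u) = \<pi> (f u)" by blast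
  show thesis
    by (rule that[OF \<open>C1_near f v r\<close>]) (use lift in simp)
qed

lemma diffeomorphicE:
  assumes "diffeomorphic S T"
  obtains F G where "dsmooth S T F" "dsmooth T S G"
    "\<And>x. x \<in> dcarrier S \<Longrightarrow> G (F x) = x" "\<And>y. y \<in> dcarrier T \<Longrightarrow> F (G y) = y"
  using assms unfolding diffeomorphic_def by blast

lemma diffeomorphic_orbit_space_0_eq:
  assumes "open_Rn 0 V" "diffeomorphic S (orbit_space 0 V \<Gamma>)" "x \<in> dcarrier S" "y \<in> dcarrier S"
  shows "x = y"
proof -
  obtain F G where F: "dsmooth S (orbit_space 0 V \<Gamma>) F" and "dsmooth (orbit_space 0 V \<Gamma>) S G"
    and GF: "\<And>x. x \<in> dcarrier S \<Longrightarrow> G (F x) = x" and "\<And>y. y \<in> dcarrier (orbit_space 0 V \<Gamma>) \<Longrightarrow> F (G y) = y"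
    using assms(2) by (rule diffeomorphicE) blast
  have "F x \<in> orbit_of \<Gamma> ` V" "F y \<in> orbit_of \<Gamma> ` V"
    using F assms(3,4) unfolding dsmooth_def dcarrier_orbit_space by auto
  moreover have "V \<subseteq> {\<lambda>_. 0}" using open_Rn_subset[OF assms(1)] by (auto simp: Rn_def)
  ultimately have "F x = F y" by auto
  then have "G (F x) = G (F y)" by simp
  then show "x = y" using GF assms(3,4) by simp
qed

lemma quotient_real_space_not_locally_orbit_space_ge_2:
  assumes "2 \<le> n" "countable \<Gamma>" "subgroup_Aff n \<Gamma>" "open_Rn n V" "x \<in> U"
    and "diffeomorphic (subspace (quotient_space real_space \<pi>) U) (orbit_space n V \<Gamma>)"
  shows False
proof -
  let ?S = "quotient_space real_space \<pi>"
  obtain F G where F: "dsmooth (subspace ?S U) (orbit_space n V \<Gamma>) F"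
    and G: "dsmooth (orbit_space n V \<Gamma>) (subspace ?S U) G"
    and "\<And>x. x \<in> dcarrier (subspace ?S U) \<Longrightarrow> G (F x) = x"
    and FG: "\<And>y. y \<in> dcarrier (orbit_space n V \<Gamma>) \<Longrightarrow> F (G y) = y"
    using assms(6) by (rule diffeomorphicE) blast
  have G_inj: "inj_on G (orbit_of \<Gamma> ` V)"
    using FG by (intro inj_on_inverseI[of _ F]) (simp add: dcarrier_orbit_space)
  have "F x \<in> orbit_of \<Gamma> ` V"
    using F \<open>x \<in> U\<close> unfolding dsmooth_def by (auto simp: dcarrier_subspace dcarrier_orbit_space)
  then obtain v where "v \<in> V" by blast
  have "dplots ?S n V (G \<circ> orbit_of \<Gamma>)"
    using G orbit_space_plot_orbit_of[OF \<open>open_Rn n V\<close>] unfolding dsmooth_def dplots_subspace by blast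
  then obtain W q where W: "open_Rn n W" "v \<in> W" "W \<subseteq> V" and q: "smooth_scalar n W q"
    and Gq: "\<forall>s\<in>W. G (orbit_of \<Gamma> s) = \<pi> (q s)"
    using \<open>v \<in> V\<close> unfolding dplots_quotient_real_space comp_def by blast
  have "countable {s'\<in>W. q s' = q s}" if "s \<in> W" for s
  proof (rule countable_subset)
    show "{s'\<in>W. q s' = q s} \<subseteq> orbit_of \<Gamma> s"
    proof
      fix s' assume s': "s' \<in> {s'\<in>W. q s' = q s}"
      then have "G (orbit_of \<Gamma> s') = G (orbit_of \<Gamma> s)" using Gq that by auto
      then have "orbit_of \<Gamma> s' = orbit_of \<Gamma> s" using inj_onD[OF G_inj] that s' W(3) by blast
      moreover have "s' \<in> Rn n" using s' W open_Rn_subset by blast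
      ultimately show "s' \<in> orbit_of \<Gamma> s" using orbit_of_refl[OF \<open>subgroup_Aff n \<Gamma>\<close>] by blast
    qed
    show "countable (orbit_of \<Gamma> s)" unfolding orbit_of_def using \<open>countable \<Gamma>\<close> by simp
  qed
  then show False
    using Rn_continuous_countable_fibres_imp_False[OF W(1) \<open>2 \<le> n\<close> W(2) smooth_scalar_imp_cont_Rn[OF q]]
    by blast
qed

section \<open>The flow of a flat vector field\<close>

locale flat_vector_field =
  fixes h \<psi> :: "real \<Rightarrow> real"
  assumes h_deriv: "\<And>x. (h has_real_derivative deriv h x) (at x)"
    and deriv_h_cont: "\<And>x. isCont (deriv h) x"
    and h_0: "h 0 = 0"
    and deriv_h_0: "deriv h 0 = 0"
    and h_pos: "\<And>x. x \<noteq> 0 \<Longrightarrow> 0 < h x"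
    and complete: "complete_vf h"
    and time_one: "time_one_flow h \<psi>"
begin

lemma h_cont: "isCont h x"
  using h_deriv DERIV_isCont by blast

lemma h_linear_bound:
  obtains L where "\<And>z. \<bar>z\<bar> \<le> R \<Longrightarrow> \<bar>h z\<bar> \<le> L * \<bar>z\<bar>"
proof -
  have "compact (deriv h ` {-R..R})"
    by (intro compact_continuous_image continuous_at_imp_continuous_on ballI deriv_h_cont) simp
  then obtain B where B: "\<And>x. x \<in> {-R..R} \<Longrightarrow> \<bar>deriv h x\<bar> \<le> B"
    using compact_imp_bounded bounded_iff by (metis image_eqI real_norm_def)
  have "\<bar>h z\<bar> \<le> B * \<bar>z\<bar>" if "\<bar>z\<bar> \<le> R" for z
  proof -
    have "norm (h z - h 0) \<le> B * norm (z - 0)"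
      by (rule field_differentiable_bound[of "{-R..R}"])
        (use that B in \<open>auto intro: has_field_derivative_at_within h_deriv\<close>)
    then show ?thesis by (simp add: h_0)
  qed
  then show ?thesis using that by blast
qed

lemma integral_curve_nonzero:
  assumes curve: "integral_curve h \<beta>" and "\<beta> s0 \<noteq> 0"
  shows "\<beta> s \<noteq> 0"
proof -
  let ?I = "{min s0 s..max s0 s}"
  have "compact (\<beta> ` ?I)"
    using curve unfolding integral_curve_def
    by (intro compact_continuous_image continuous_at_imp_continuous_on ballI DERIV_isCont) auto
  then obtain R where R: "\<And>x. x \<in> ?I \<Longrightarrow> \<bar>\<beta> x\<bar> \<le> R"
    using compact_imp_bounded bounded_iff by (metis image_eqI real_norm_def)
  obtain L where L: "\<And>z. \<bar>z\<bar> \<le> R \<Longrightarrow> \<bar>h z\<bar> \<le> L * \<bar>z\<bar>"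
    using h_linear_bound by blast
  have "0 < (\<beta> s)\<^sup>2"
  proof (rule gronwall_positive[where q = "\<lambda>x. (\<beta> x)\<^sup>2" and q' = "\<lambda>x. 2 * \<beta> x * h (\<beta> x)" and K = "2 * L"])
    show "((\<lambda>x. (\<beta> x)\<^sup>2) has_real_derivative 2 * \<beta> x * h (\<beta> x)) (at x)" for x
      using curve unfolding integral_curve_def by (auto intro!: derivative_eq_intros)
    show "\<bar>2 * \<beta> x * h (\<beta> x)\<bar> \<le> 2 * L * (\<beta> x)\<^sup>2" if "min s0 s \<le> x" "x \<le> max s0 s" for x
    proof -
      have "\<bar>\<beta> x\<bar> * \<bar>h (\<beta> x)\<bar> \<le> \<bar>\<beta> x\<bar> * (L * \<bar>\<beta> x\<bar>)"
        using L R that by (intro mult_left_mono) auto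
      then show ?thesis by (simp add: abs_mult power2_eq_square algebra_simps)
    qed
  qed (use \<open>\<beta> s0 \<noteq> 0\<close> in simp)
  then show ?thesis by simp
qed

text \<open>The flow line through 1; on \<open>{0<..}\<close> it conjugates \<psi> to the shift by 1 (see \<open>psi_pos\<close>).\<close>
definition traj :: "real \<Rightarrow> real" where
  "traj = (SOME \<beta>. \<beta> 0 = 1 \<and> integral_curve h \<beta>)"

lemma traj_0: "traj 0 = 1" and traj_integral_curve: "integral_curve h traj"
proof -
  have "\<exists>\<beta>. \<beta> 0 = 1 \<and> integral_curve h \<beta>" using complete unfolding complete_vf_def by blast
  then have "traj 0 = 1 \<and> integral_curve h traj" unfolding traj_def by (rule someI_ex)
  then show "traj 0 = 1" "integral_curve h traj" by auto
qed

lemma traj_deriv: "(traj has_real_derivative h (traj s)) (at s)"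
  using traj_integral_curve unfolding integral_curve_def by blast

lemma traj_cont: "isCont traj s"
  using traj_deriv DERIV_isCont by blast

lemma traj_pos: "0 < traj s"
proof (rule ccontr)
  assume "\<not> 0 < traj s"
  then have "\<exists>x. traj x = 0"
  proof (cases "s \<le> 0")
    case True
    then show ?thesis using IVT[of traj s 0 0] \<open>\<not> 0 < traj s\<close> traj_0 traj_cont by force
  next
    case False
    then show ?thesis using IVT2[of traj s 0 0] \<open>\<not> 0 < traj s\<close> traj_0 traj_cont by force
  qed
  then obtain x where "traj x = 0" ..
  then show False
    using integral_curve_nonzero[OF traj_integral_curve, of 0 x] traj_0 by simp
qed

lemma h_traj_pos: "0 < h (traj s)"
  using h_pos traj_pos by (metis less_irrefl)

lemma strict_mono_traj: "strict_mono traj"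
  by (rule strict_monoI, rule DERIV_pos_imp_increasing) (use traj_deriv h_traj_pos in blast)+

lemma traj_growth:
  assumes "0 < a"
  obtains m where "0 < m"
    "\<And>s s'. s \<le> s' \<Longrightarrow> a \<le> traj s \<Longrightarrow> traj s' \<le> b \<Longrightarrow> m * (s' - s) \<le> traj s' - traj s"
proof -
  obtain m where m: "0 < m" "\<And>z. a \<le> z \<Longrightarrow> z \<le> b \<Longrightarrow> m \<le> h z"
  proof (cases "a \<le> b")
    case True
    have "\<exists>z\<in>{a..b}. \<forall>y\<in>{a..b}. h z \<le> h y"
      by (rule continuous_attains_inf) (use True in \<open>auto intro: continuous_at_imp_continuous_on h_cont\<close>)
    then obtain z where z: "z \<in> {a..b}" "\<And>y. y \<in> {a..b} \<Longrightarrow> h z \<le> h y" by blast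
    show thesis by (rule that[of "h z"]) (use z assms h_pos in auto)
  next
    case False
    then show thesis by (intro that[of 1]) auto
  qed
  have "m * (s' - s) \<le> traj s' - traj s"
    if "s \<le> s'" "a \<le> traj s" "traj s' \<le> b" for s s'
  proof -
    have "traj s - m * s \<le> traj s' - m * s'"
    proof (rule DERIV_nonneg_imp_nondecreasing[OF \<open>s \<le> s'\<close>])
      fix x assume "s \<le> x" "x \<le> s'"
      then have "traj s \<le> traj x" "traj x \<le> traj s'"
        by (simp_all add: strict_mono_less_eq[OF strict_mono_traj])
      then have "a \<le> traj x" "traj x \<le> b" using that by linarith+
      then show "\<exists>y. ((\<lambda>x. traj x - m * x) has_real_derivative y) (at x) \<and> 0 \<le> y"
        using m by (intro exI[of _ "h (traj x) - m"]) (auto intro!: derivative_eq_intros traj_deriv)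
    qed
    then show ?thesis by (simp add: algebra_simps)
  qed
  then show thesis using that m by blast
qed

lemma traj_below: "0 < y \<Longrightarrow> \<exists>s. traj s < y"
proof (rule ccontr)
  assume "0 < y" "\<nexists>s. traj s < y"
  then have above: "y \<le> traj s" for s using not_less by blast
  obtain m where "0 < m" and m: "\<And>s s'. s \<le> s' \<Longrightarrow> y \<le> traj s \<Longrightarrow> traj s' \<le> 1 \<Longrightarrow> m * (s' - s) \<le> traj s' - traj s"
    using traj_growth[OF \<open>0 < y\<close>, of 1] by blast
  have "m * (0 - (- 2 / m)) \<le> traj 0 - traj (- 2 / m)"
    using \<open>0 < m\<close> by (intro m above) (simp_all add: traj_0)
  then show False using \<open>0 < m\<close> traj_pos[of "- 2 / m"] by (simp add: traj_0)
qed

lemma traj_above: "\<exists>s. y < traj s"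
proof (rule ccontr)
  assume "\<nexists>s. y < traj s"
  then have below: "traj s \<le> y" for s using not_less by blast
  obtain m where "0 < m" and m: "\<And>s s'. s \<le> s' \<Longrightarrow> 1 \<le> traj s \<Longrightarrow> traj s' \<le> y \<Longrightarrow> m * (s' - s) \<le> traj s' - traj s"
    using traj_growth[of 1 y] by auto
  have "1 \<le> y" using below[of 0] by (simp add: traj_0)
  have "m * (2 * y / m - 0) \<le> traj (2 * y / m) - traj 0"
    using \<open>0 < m\<close> \<open>1 \<le> y\<close> by (intro m below) (simp_all add: traj_0)
  then show False using \<open>0 < m\<close> \<open>1 \<le> y\<close> below[of "2 * y / m"] by (simp add: traj_0)
qed

lemma range_traj: "range traj = {0<..}"
proof (intro equalityI subsetI)
  fix y :: real assume "y \<in> {0<..}"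
  then obtain s1 s2 where s: "traj s1 < y" "y < traj s2"
    using traj_below[of y] traj_above[of y] by auto
  then have "traj s1 < traj s2" by linarith
  then have "s1 \<le> s2" by (simp add: strict_mono_less[OF strict_mono_traj])
  then obtain x where "traj x = y" using IVT[of traj s1 y s2] s traj_cont by auto
  then show "y \<in> range traj" by blast
qed (auto simp: traj_pos)

lemma traj_inv_traj: "0 < y \<Longrightarrow> traj (inv traj y) = y"
  using range_traj by (simp add: f_inv_into_f)

lemma inv_traj_traj [simp]: "inv traj (traj s) = s"
  using strict_mono_traj by (simp add: strict_mono_imp_inj_on)

lemma inv_traj_less_iff: "0 < y \<Longrightarrow> inv traj y < s \<longleftrightarrow> y < traj s"
  by (subst strict_mono_less[OF strict_mono_traj, symmetric]) (simp add: traj_inv_traj)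

lemma inv_traj_cont: "0 < y \<Longrightarrow> isCont (inv traj) y"
  using isCont_inverse_function[where d = 1 and f = traj and g = "inv traj" and x = "inv traj y"]
    traj_cont traj_inv_traj by simp

lemma traj_at_bot: "(traj \<longlongrightarrow> 0) at_bot"
proof (rule order_tendstoI)
  fix e :: real assume "0 < e"
  then obtain S where "traj S < e" using traj_below by blast
  then show "\<forall>\<^sub>F s in at_bot. traj s < e"
    unfolding eventually_at_bot_linorder
    using strict_mono_less_eq[OF strict_mono_traj] by (meson le_less_trans)
qed (auto intro!: always_eventually less_trans[OF _ traj_pos])

lemma inv_traj_at_right_0: "filterlim (inv traj) at_bot (at_right 0)"
  unfolding filterlim_at_bot_dense
proof
  fix Z :: real
  show "\<forall>\<^sub>F y in at_right 0. inv traj y < Z"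
    unfolding eventually_at_right_field
    using traj_pos inv_traj_less_iff by (intro exI[of _ "traj Z"]) auto
qed

lemma psi_apply: "\<gamma> 0 = x \<Longrightarrow> integral_curve h \<gamma> \<Longrightarrow> \<psi> x = \<gamma> 1"
  using time_one unfolding time_one_flow_def by blast

lemma psi_0: "\<psi> 0 = 0"
  using psi_apply[of "\<lambda>_. 0"] by (simp add: integral_curve_def h_0)

lemma psi_pos: "0 < x \<Longrightarrow> \<psi> x = traj (inv traj x + 1)"
proof -
  assume "0 < x"
  have "integral_curve h (\<lambda>s. traj (s + inv traj x))"
    unfolding integral_curve_def
    using DERIV_chain2[OF traj_deriv DERIV_shift[THEN iffD1, OF DERIV_ident]] by simp
  from psi_apply[OF _ this] show ?thesis
    using traj_inv_traj[OF \<open>0 < x\<close>] by (simp add: add.commute)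
qed

lemma psi_neg: "x < 0 \<Longrightarrow> \<psi> x < 0"
proof -
  assume "x < 0"
  obtain \<beta> where \<beta>: "\<beta> 0 = x" "integral_curve h \<beta>" using complete unfolding complete_vf_def by blast
  have "\<beta> 1 < 0"
  proof (rule ccontr)
    assume "\<not> \<beta> 1 < 0"
    then obtain z where "\<beta> z = 0"
      using IVT[of \<beta> 0 0 1] \<beta> \<open>x < 0\<close> DERIV_isCont unfolding integral_curve_def by force
    then show False using integral_curve_nonzero[OF \<beta>(2), of 0 z] \<beta>(1) \<open>x < 0\<close> by simp
  qed
  then show ?thesis using psi_apply[OF \<beta>] by simp
qed

lemma psi_gt: "0 < x \<Longrightarrow> x < \<psi> x"
proof -
  assume "0 < x"
  have "traj (inv traj x) < traj (inv traj x + 1)" by (simp add: strict_mono_less[OF strict_mono_traj])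
  then show ?thesis by (simp add: psi_pos \<open>0 < x\<close> traj_inv_traj)
qed

lemma psi_mono: "0 < x \<Longrightarrow> x < y \<Longrightarrow> \<psi> x < \<psi> y"
proof -
  assume "0 < x" "x < y"
  then have "inv traj x < inv traj y" by (simp add: inv_traj_less_iff traj_inv_traj)
  then show ?thesis using \<open>0 < x\<close> \<open>x < y\<close> by (simp add: psi_pos strict_mono_less[OF strict_mono_traj])
qed

lemma psi_pos_iff: "0 < \<psi> y \<longleftrightarrow> 0 < y"
  using psi_pos[of y] psi_neg[of y] psi_0 traj_pos[of "inv traj y + 1"]
  by (cases y "0::real" rule: linorder_cases) auto

lemma psi_eq_0_iff: "\<psi> y = 0 \<longleftrightarrow> y = 0"
  using psi_pos[of y] psi_neg[of y] psi_0 traj_pos[of "inv traj y + 1"]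
  by (cases y "0::real" rule: linorder_cases) auto

lemma funpow_psi_pos: "0 < x \<Longrightarrow> (\<psi> ^^ k) x = traj (inv traj x + real k)"
  by (induction k) (simp_all add: traj_inv_traj psi_pos traj_pos add_ac)

lemma funpow_psi_eq_0_iff: "(\<psi> ^^ k) y = 0 \<longleftrightarrow> y = 0"
  and funpow_psi_pos_iff: "0 < (\<psi> ^^ k) y \<longleftrightarrow> 0 < y"
  by (induction k) (simp_all add: psi_eq_0_iff psi_pos_iff)

lemma Z_orbit_refl: "y \<in> Z_orbit \<psi> y"
  unfolding Z_orbit_def by (auto intro: exI[of _ 0])

lemma Z_orbit_0: "Z_orbit \<psi> 0 = {0}"
  unfolding Z_orbit_def using funpow_psi_eq_0_iff by (auto intro: exI[of _ 0])

lemma Z_orbit_pos: "0 < t \<Longrightarrow> Z_orbit \<psi> t = range (\<lambda>k::int. traj (inv traj t + of_int k))"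
proof (intro equalityI subsetI)
  fix y assume "0 < t" "y \<in> Z_orbit \<psi> t"
  then obtain k where "y = (\<psi> ^^ k) t \<or> t = (\<psi> ^^ k) y" unfolding Z_orbit_def by blast
  then show "y \<in> range (\<lambda>k::int. traj (inv traj t + of_int k))"
  proof
    assume "y = (\<psi> ^^ k) t"
    then have "y = traj (inv traj t + of_int (int k))" using funpow_psi_pos[OF \<open>0 < t\<close>] by simp
    then show ?thesis by (rule range_eqI)
  next
    assume t: "t = (\<psi> ^^ k) y"
    then have "0 < y" using funpow_psi_pos_iff \<open>0 < t\<close> by blast
    then have "inv traj t = inv traj y + real k" using t funpow_psi_pos by simp
    then have "y = traj (inv traj t + of_int (- int k))" using traj_inv_traj[OF \<open>0 < y\<close>] by simp
    then show ?thesis by (rule range_eqI)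
  qed
next
  fix y assume "0 < t" "y \<in> range (\<lambda>k::int. traj (inv traj t + of_int k))"
  then obtain k :: int where k: "y = traj (inv traj t + of_int k)" by blast
  show "y \<in> Z_orbit \<psi> t"
  proof (cases "0 \<le> k")
    case True
    then have "y = (\<psi> ^^ nat k) t" using funpow_psi_pos[OF \<open>0 < t\<close>] k by simp
    then show ?thesis unfolding Z_orbit_def by blast
  next
    case False
    then have "(\<psi> ^^ nat (- k)) y = traj (inv traj t)"
      using k funpow_psi_pos[OF traj_pos] by simp
    then have "t = (\<psi> ^^ nat (- k)) y" using traj_inv_traj[OF \<open>0 < t\<close>] by simp
    then show ?thesis unfolding Z_orbit_def by blast
  qed
qed

lemma Z_orbit_pos_mem:
  assumes "0 < t" "y \<in> Z_orbit \<psi> t"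
  shows "0 < y" "inv traj y - inv traj t \<in> \<int>"
  using assms by (auto simp: Z_orbit_pos traj_pos)

lemma Z_orbit_psi: "0 < t \<Longrightarrow> Z_orbit \<psi> (\<psi> t) = Z_orbit \<psi> t"
  by (simp add: Z_orbit_pos psi_pos traj_pos range_shift_int)

lemma traj_shift_ratio_at_bot: "((\<lambda>s. traj (s + d) / traj s) \<longlongrightarrow> 1) at_bot"
proof -
  have "((\<lambda>z. h z / z) \<longlongrightarrow> 0) (at 0)"
    using h_deriv[of 0] by (simp add: has_field_derivative_iff h_0 deriv_h_0)
  moreover have "filterlim traj (at 0) at_bot"
    by (simp add: filterlim_at traj_at_bot traj_pos less_imp_neq[symmetric])
  ultimately have log_deriv_lim: "((\<lambda>x. h (traj x) / traj x) \<longlongrightarrow> 0) at_bot"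
    by (rule filterlim_compose)
  have log_deriv: "((\<lambda>x. ln (traj x)) has_real_derivative h (traj x) / traj x) (at x)" for x
    using DERIV_chain2[OF DERIV_ln_divide[OF traj_pos] traj_deriv] by simp
  have "((\<lambda>s. ln (traj (s + d)) - ln (traj s)) \<longlongrightarrow> 0) at_bot"
  proof (rule tendstoI)
    fix e :: real assume "0 < e"
    then have "\<forall>\<^sub>F x in at_bot. \<bar>h (traj x) / traj x\<bar> < e / (\<bar>d\<bar> + 1)"
      using tendstoD[OF log_deriv_lim, of "e / (\<bar>d\<bar> + 1)"] by simp
    then obtain N where N: "\<And>x. x \<le> N \<Longrightarrow> \<bar>h (traj x) / traj x\<bar> < e / (\<bar>d\<bar> + 1)"
      unfolding eventually_at_bot_linorder by blast
    have "\<bar>ln (traj (s + d)) - ln (traj s)\<bar> < e" if "s \<le> N - \<bar>d\<bar>" for s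
    proof -
      have "norm (ln (traj (s + d)) - ln (traj s)) \<le> e / (\<bar>d\<bar> + 1) * norm (s + d - s)"
        by (rule field_differentiable_bound[of "{s - \<bar>d\<bar>..s + \<bar>d\<bar>}"])
          (use that N in \<open>auto intro: has_field_derivative_at_within log_deriv less_imp_le\<close>)
      also have "\<dots> < e" using \<open>0 < e\<close> by (simp add: field_simps)
      finally show ?thesis by simp
    qed
    then show "\<forall>\<^sub>F s in at_bot. dist (ln (traj (s + d)) - ln (traj s)) 0 < e"
      unfolding eventually_at_bot_linorder by auto
  qed
  then have "((\<lambda>s. exp (ln (traj (s + d)) - ln (traj s))) \<longlongrightarrow> exp 0) at_bot"
    by (rule tendsto_exp)
  then show ?thesis by (simp add: exp_diff traj_pos)
qed

lemma traj_shift_ratio: "((\<lambda>y. traj (inv traj y + d) / y) \<longlongrightarrow> 1) (at_right 0)"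
proof -
  have "((\<lambda>y. traj (inv traj y + d) / traj (inv traj y)) \<longlongrightarrow> 1) (at_right 0)"
    using filterlim_compose[OF traj_shift_ratio_at_bot inv_traj_at_right_0] .
  moreover have "\<forall>\<^sub>F y in at_right 0. traj (inv traj y + d) / traj (inv traj y) = traj (inv traj y + d) / y"
    by (simp add: eventually_at_right_field traj_inv_traj exI[of _ 1])
  ultimately show ?thesis by (simp add: tendsto_cong)
qed

lemma psi_at_right_0: "(\<psi> \<longlongrightarrow> 0) (at_right 0)"
proof -
  have "((\<lambda>y. traj (inv traj y + 1) / y * y) \<longlongrightarrow> 1 * 0) (at_right 0)"
    by (intro tendsto_mult traj_shift_ratio tendsto_ident_at)
  moreover have "\<forall>\<^sub>F y in at_right 0. traj (inv traj y + 1) / y * y = \<psi> y"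
    by (simp add: eventually_at_right_field psi_pos exI[of _ 1])
  ultimately show ?thesis by (simp add: tendsto_cong)
qed

lemma h_traj_step_bound:
  obtains L where "\<And>s. s \<le> -1 \<Longrightarrow> h (traj (s + 1)) \<le> exp L * h (traj s)"
proof -
  have "compact (deriv h ` {0..1})"
    by (intro compact_continuous_image continuous_at_imp_continuous_on ballI deriv_h_cont) simp
  then obtain B where B: "\<And>z. z \<in> {0..1} \<Longrightarrow> \<bar>deriv h z\<bar> \<le> B"
    using compact_imp_bounded bounded_iff by (metis image_eqI real_norm_def)
  have log_deriv: "((\<lambda>x. ln (h (traj x))) has_real_derivative deriv h (traj x)) (at x)" for x
  proof -
    have "h (traj x) \<noteq> 0" using h_traj_pos[of x] by simp
    then show ?thesis
      using DERIV_chain2[OF DERIV_ln_divide[OF h_traj_pos[of x]] DERIV_chain2[OF h_deriv traj_deriv]] by simp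
  qed
  have "h (traj (s + 1)) \<le> exp B * h (traj s)" if "s \<le> -1" for s
  proof -
    have "traj x \<in> {0..1}" if "x \<le> s + 1" for x
      using that \<open>s \<le> -1\<close> traj_pos[of x] strict_mono_less_eq[OF strict_mono_traj, of x 0]
      by (simp add: traj_0)
    then have "norm (ln (h (traj (s + 1))) - ln (h (traj s))) \<le> B * norm (s + 1 - s)"
      by (intro field_differentiable_bound[of "{s..s + 1}"])
        (auto intro: has_field_derivative_at_within log_deriv B)
    then have "exp (ln (h (traj (s + 1)))) \<le> exp (B + ln (h (traj s)))" by simp
    then show ?thesis using h_traj_pos by (simp add: exp_add)
  qed
  then show thesis using that by blast
qed

text \<open>For \<open>t = traj s\<close> we have \<open>\<psi> t = traj (s + 1)\<close>, and the derivative of \<open>traj (s + 1) - e\<^sup>L traj s\<close>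
  is non-positive for \<open>s \<le> -1\<close>.\<close>
lemma psi_lipschitz_at_right_0:
  obtains \<delta> B where "0 < \<delta>" "\<And>t1 t2. 0 < t1 \<Longrightarrow> t1 \<le> t2 \<Longrightarrow> t2 < \<delta> \<Longrightarrow> \<psi> t2 - \<psi> t1 \<le> B * (t2 - t1)"
proof -
  obtain L where L: "\<And>s. s \<le> -1 \<Longrightarrow> h (traj (s + 1)) \<le> exp L * h (traj s)"
    using h_traj_step_bound by blast
  let ?F = "\<lambda>s. traj (s + 1) - exp L * traj s"
  have F_antimono: "?F s2 \<le> ?F s1" if "s1 \<le> s2" "s2 \<le> -1" for s1 s2
  proof (rule DERIV_nonpos_imp_nonincreasing[OF \<open>s1 \<le> s2\<close>])
    fix x assume "s1 \<le> x" "x \<le> s2"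
    have "(?F has_real_derivative h (traj (x + 1)) - exp L * h (traj x)) (at x)"
      using DERIV_chain2[OF traj_deriv DERIV_shift[THEN iffD1, OF DERIV_ident]]
      by (auto intro!: derivative_eq_intros traj_deriv)
    moreover have "h (traj (x + 1)) - exp L * h (traj x) \<le> 0" using L[of x] \<open>x \<le> s2\<close> that by simp
    ultimately show "\<exists>y. (?F has_real_derivative y) (at x) \<and> y \<le> 0" by blast
  qed
  have "\<psi> t2 - \<psi> t1 \<le> exp L * (t2 - t1)" if "0 < t1" "t1 \<le> t2" "t2 < traj (-1)" for t1 t2
  proof -
    have "\<not> inv traj t2 < inv traj t1"
      using that inv_traj_less_iff[of t2 "inv traj t1"] traj_inv_traj[of t1] by simp
    moreover have "inv traj t2 < -1" using that inv_traj_less_iff[of t2 "-1"] by simp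
    ultimately have "inv traj t1 \<le> inv traj t2" "inv traj t2 \<le> -1" by simp_all
    then have "?F (inv traj t2) \<le> ?F (inv traj t1)" by (rule F_antimono)
    then show ?thesis using that by (simp add: psi_pos traj_inv_traj algebra_simps)
  qed
  then show thesis using that[of "traj (-1)"] traj_pos by blast
qed

lemma orbit_selection:
  assumes "connected I" "continuous_on I \<phi>1" "continuous_on I \<phi>2"
    and pos: "\<And>u. u \<in> I \<Longrightarrow> 0 < \<phi>1 u"
    and orbit: "\<And>u. u \<in> I \<Longrightarrow> \<phi>2 u \<in> Z_orbit \<psi> (\<phi>1 u)"
  obtains k :: int where "\<And>u. u \<in> I \<Longrightarrow> \<phi>2 u = traj (inv traj (\<phi>1 u) + of_int k)"
proof (cases "I = {}")
  case False
  then obtain u0 where "u0 \<in> I" by blast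
  let ?K = "\<lambda>u. inv traj (\<phi>2 u) - inv traj (\<phi>1 u)"
  have pos2: "0 < \<phi>2 u" if "u \<in> I" for u
    using Z_orbit_pos_mem(1)[OF pos[OF that] orbit[OF that]] .
  have K_int: "?K u \<in> \<int>" if "u \<in> I" for u
    using Z_orbit_pos_mem(2)[OF pos[OF that] orbit[OF that]] .
  have inv_cont: "continuous_on {0<..} (inv traj)"
    by (intro continuous_at_imp_continuous_on ballI inv_traj_cont) simp
  have "continuous_on I (\<lambda>u. inv traj (\<phi>2 u))"
    by (rule continuous_on_compose2[OF inv_cont assms(3)]) (auto simp: pos2)
  moreover have "continuous_on I (\<lambda>u. inv traj (\<phi>1 u))"
    by (rule continuous_on_compose2[OF inv_cont assms(2)]) (auto simp: pos)
  ultimately have "continuous_on I ?K" by (rule continuous_on_diff)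
  moreover have "1 \<le> norm (?K v - ?K u)" if "u \<in> I" "v \<in> I" "?K v \<noteq> ?K u" for u v
  proof -
    have "?K v - ?K u \<in> \<int>" using K_int[OF that(2)] K_int[OF that(1)] by (rule Ints_diff)
    then obtain z :: int where z: "?K v - ?K u = of_int z" by (elim Ints_cases)
    with that(3) have "z \<noteq> 0" by auto
    then have "1 \<le> \<bar>real_of_int z\<bar>" by linarith
    then show ?thesis using z by simp
  qed
  ultimately have "?K constant_on I"
    by (intro continuous_discrete_range_constant[OF \<open>connected I\<close>]) (auto intro!: exI[of _ 1])
  then obtain c where c: "\<And>u. u \<in> I \<Longrightarrow> ?K u = c" unfolding constant_on_def by blast
  obtain k :: int where k: "c = of_int k"
    using K_int[OF \<open>u0 \<in> I\<close>] c[OF \<open>u0 \<in> I\<close>] by (auto elim: Ints_cases)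
  have "\<phi>2 u = traj (inv traj (\<phi>1 u) + of_int k)" if "u \<in> I" for u
    using c[OF that] k traj_inv_traj[OF pos2[OF that]] by (simp add: algebra_simps)
  then show thesis by (rule that)
qed simp

subsection \<open>One-dimensional charts\<close>

text \<open>The orbit map is tangent to the identity at 0: \<open>traj (inv traj y + k) / y \<rightarrow> 1\<close>.\<close>
lemma orbit_related_germs_same_derivative:
  assumes a: "(a has_real_derivative A) (at 0)" and b: "(b has_real_derivative B) (at 0)"
    and "a 0 = 0" "b 0 = 0" "0 < \<rho>"
    and "continuous_on {0<..<\<rho>} a" "continuous_on {0<..<\<rho>} b"
    and pos: "\<And>w. 0 < w \<Longrightarrow> w < \<rho> \<Longrightarrow> 0 < a w"
    and orbit: "\<And>w. 0 < w \<Longrightarrow> w < \<rho> \<Longrightarrow> b w \<in> Z_orbit \<psi> (a w)"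
  shows "B = A"
proof -
  obtain k :: int where k: "\<And>w. w \<in> {0<..<\<rho>} \<Longrightarrow> b w = traj (inv traj (a w) + of_int k)"
    using orbit_selection[of "{0<..<\<rho>}" a b] assms by auto
  have "(a \<longlongrightarrow> 0) (at_right 0)"
    using DERIV_isCont[OF a] \<open>a 0 = 0\<close> by (simp add: isCont_def filterlim_at_split)
  moreover have "\<forall>\<^sub>F w in at_right 0. a w \<in> {0<..} \<and> a w \<noteq> 0"
    unfolding eventually_at_right_field using \<open>0 < \<rho>\<close> pos by force
  ultimately have a_at_right: "filterlim a (at_right 0) (at_right 0)"
    by (simp add: filterlim_at)
  have "((\<lambda>w. traj (inv traj (a w) + of_int k) / a w * (a w / w)) \<longlongrightarrow> 1 * A) (at_right 0)"
    by (intro tendsto_mult filterlim_compose[OF traj_shift_ratio a_at_right]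
        difference_quotient_at_right_0 a \<open>a 0 = 0\<close>)
  moreover have "\<forall>\<^sub>F w in at_right 0. traj (inv traj (a w) + of_int k) / a w * (a w / w) = b w / w"
    unfolding eventually_at_right_field using \<open>0 < \<rho>\<close> k pos
    by (intro exI[of _ \<rho>]) (auto simp: less_imp_neq[symmetric])
  ultimately have "((\<lambda>w. b w / w) \<longlongrightarrow> 1 * A) (at_right 0)" by (rule Lim_transform_eventually)
  moreover have "((\<lambda>w. b w / w) \<longlongrightarrow> B) (at_right 0)"
    by (rule difference_quotient_at_right_0[OF b \<open>b 0 = 0\<close>])
  ultimately show "B = A" using tendsto_unique[OF trivial_limit_at_right_real] by force
qed

lemma invariant_germ_coefficient_eq_1:
  assumes f: "C1_near f v r" and "f v = 0" "deriv f v \<noteq> 0" and fixed: "\<alpha> * v + \<beta> = v"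
    and invariant: "\<And>u. \<bar>u - v\<bar> < r \<Longrightarrow> \<bar>\<alpha> * u + \<beta> - v\<bar> < r \<Longrightarrow> f (\<alpha> * u + \<beta>) \<in> Z_orbit \<psi> (f u)"
  shows "\<alpha> = 1"
proof -
  define s where "s = sgn (deriv f v)"
  have s: "\<bar>s\<bar> = 1" "0 < deriv f v * s" using \<open>deriv f v \<noteq> 0\<close> by (auto simp: s_def sgn_real_def)
  define \<rho>0 where "\<rho>0 = r / (\<bar>\<alpha>\<bar> + 1)"
  have "0 < \<rho>0" using f by (simp add: \<rho>0_def C1_near_def)
  have small: "\<bar>s * w\<bar> < r" "\<bar>(s * \<alpha>) * w\<bar> < r" if "\<bar>w\<bar> < \<rho>0" for w
  proof -
    have "\<bar>w\<bar> * (\<bar>\<alpha>\<bar> + 1) < r" using that by (simp add: \<rho>0_def field_simps)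
    then show "\<bar>s * w\<bar> < r" "\<bar>(s * \<alpha>) * w\<bar> < r"
      using s(1) by (auto simp: abs_mult algebra_simps intro: le_less_trans[rotated])
  qed
  let ?a = "\<lambda>w. f (v + s * w)" and ?b = "\<lambda>w. f (v + (s * \<alpha>) * w)"
  have a_deriv: "(?a has_real_derivative deriv f (v + s * w) * s) (at w)"
    and b_deriv: "(?b has_real_derivative deriv f (v + (s * \<alpha>) * w) * (s * \<alpha>)) (at w)"
    if "\<bar>w\<bar> < \<rho>0" for w
    using C1_near_deriv_linear[OF f small(1)[OF that]] C1_near_deriv_linear[OF f small(2)[OF that]] by auto
  have "\<exists>d>0. \<forall>w>0. w < d \<longrightarrow> ?a 0 < ?a (0 + w)"
    by (rule DERIV_pos_inc_right[OF a_deriv]) (use \<open>0 < \<rho>0\<close> s(2) in simp_all)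
  then obtain d where "0 < d" and a_pos: "\<And>w. 0 < w \<Longrightarrow> w < d \<Longrightarrow> ?a 0 < ?a (0 + w)" by blast
  define \<rho> where "\<rho> = min d \<rho>0"
  have cont: "continuous_on {0<..<\<rho>} ?a" "continuous_on {0<..<\<rho>} ?b"
    by (intro continuous_at_imp_continuous_on ballI DERIV_isCont[OF a_deriv] DERIV_isCont[OF b_deriv];
        simp add: \<rho>_def)+
  have "deriv f v * (s * \<alpha>) = deriv f v * s"
  proof (rule orbit_related_germs_same_derivative[where a = ?a and b = ?b])
    show "(?a has_real_derivative deriv f v * s) (at 0)" using a_deriv[of 0] \<open>0 < \<rho>0\<close> by simp
    show "(?b has_real_derivative deriv f v * (s * \<alpha>)) (at 0)" using b_deriv[of 0] \<open>0 < \<rho>0\<close> by simp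
    show "0 < ?a w" if "0 < w" "w < \<rho>" for w using a_pos[of w] that \<open>f v = 0\<close> by (simp add: \<rho>_def)
    show "?b w \<in> Z_orbit \<psi> (?a w)" if "0 < w" "w < \<rho>" for w
    proof -
      have "v + (s * \<alpha>) * w = \<alpha> * (v + s * w) + \<beta>" using fixed by (simp add: algebra_simps)
      then show ?thesis using invariant[of "v + s * w"] small[of w] that by (simp add: \<rho>_def)
    qed
  qed (use cont \<open>f v = 0\<close> \<open>0 < d\<close> \<open>0 < \<rho>0\<close> in \<open>simp_all add: \<rho>_def\<close>)
  then show "\<alpha> = 1" using s(2) by auto
qed

text \<open>Pigeonhole over the uncountably many pairs \<open>t \<sim> \<psi> t\<close>: two of them, \<open>t\<^sub>a < t\<^sub>b\<close>, are related
  by the same affine map, whose slope is then controlled by the bi-Lipschitz bounds on \<open>g\<close>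
  and on \<open>\<psi>\<close>.\<close>
lemma nonidentity_coefficient_near_base_point:
  assumes "g 0 = v" "0 < \<rho>" "0 < m" "countable M" "0 < \<epsilon>"
    and bilip: "\<And>x y. \<bar>x\<bar> < \<rho> \<Longrightarrow> \<bar>y\<bar> < \<rho> \<Longrightarrow> m * \<bar>y - x\<bar> \<le> \<bar>g y - g x\<bar> \<and> \<bar>g y - g x\<bar> \<le> K * \<bar>y - x\<bar>"
    and equivariant: "\<And>t. 0 < t \<Longrightarrow> t < \<rho> \<Longrightarrow> \<psi> t < \<rho> \<Longrightarrow> \<exists>(\<alpha>, \<beta>)\<in>M. g (\<psi> t) = \<alpha> * g t + \<beta>"
  obtains \<alpha> \<beta> where "(\<alpha>, \<beta>) \<in> M" "(\<alpha>, \<beta>) \<noteq> (1, 0)" "\<bar>\<alpha> * v + \<beta> - v\<bar> < \<epsilon>"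
proof -
  obtain \<delta>\<psi> B where "0 < \<delta>\<psi>"
    and psi_lip: "\<And>t1 t2. 0 < t1 \<Longrightarrow> t1 \<le> t2 \<Longrightarrow> t2 < \<delta>\<psi> \<Longrightarrow> \<psi> t2 - \<psi> t1 \<le> B * (t2 - t1)"
    using psi_lipschitz_at_right_0 by blast
  define \<Lambda> where "\<Lambda> = K * B / m"
  have "((\<lambda>t. K * \<psi> t + \<Lambda> * K * t) \<longlongrightarrow> K * 0 + \<Lambda> * K * 0) (at_right 0)"
    by (intro tendsto_intros psi_at_right_0)
  then have "\<forall>\<^sub>F t in at_right 0. t < min \<rho> \<delta>\<psi> \<and> \<psi> t < \<rho> \<and> K * \<psi> t + \<Lambda> * K * t < \<epsilon>"
    using \<open>0 < \<rho>\<close> \<open>0 < \<delta>\<psi>\<close> \<open>0 < \<epsilon>\<close> psi_at_right_0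
    by (intro eventually_conj order_tendstoD(2)[OF tendsto_ident_at]) (auto dest: order_tendstoD(2))
  then obtain \<delta> where "0 < \<delta>" and small:
    "\<And>t. 0 < t \<Longrightarrow> t < \<delta> \<Longrightarrow> t < \<rho> \<and> t < \<delta>\<psi> \<and> \<psi> t < \<rho> \<and> K * \<psi> t + \<Lambda> * K * t < \<epsilon>"
    unfolding eventually_at_right_field by auto
  obtain ta tb \<alpha> \<beta> where "0 < ta" "ta < tb" "tb < \<delta>" "(\<alpha>, \<beta>) \<in> M"
    and ga: "g (\<psi> ta) = \<alpha> * g ta + \<beta>" and gb: "g (\<psi> tb) = \<alpha> * g tb + \<beta>"
  proof (rule interval_pigeonhole[OF \<open>0 < \<delta>\<close> \<open>countable M\<close>, of "\<lambda>t p. g (\<psi> t) = fst p * g t + snd p"])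
    show "\<exists>p\<in>M. g (\<psi> t) = fst p * g t + snd p" if "0 < t" "t < \<delta>" for t
      using equivariant small[OF that] that by (simp add: case_prod_unfold)
  qed (use that in auto)
  have "ta < \<delta>" "0 < tb" using \<open>0 < ta\<close> \<open>ta < tb\<close> \<open>tb < \<delta>\<close> by simp_all
  note a = small[OF \<open>0 < ta\<close> \<open>ta < \<delta>\<close>] and b = small[OF \<open>0 < tb\<close> \<open>tb < \<delta>\<close>]
  have "ta < \<psi> ta" "\<psi> ta < \<psi> tb" using psi_gt psi_mono \<open>0 < ta\<close> \<open>ta < tb\<close> by auto
  have "m * ta \<le> \<bar>g ta - g 0\<bar>" "\<bar>g ta - g 0\<bar> \<le> K * ta"
    using bilip[of 0 ta] a \<open>0 < ta\<close> \<open>0 < \<rho>\<close> by simp_all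
  then have "m * ta \<le> K * ta" by (rule order_trans)
  then have "0 \<le> K" using \<open>0 < ta\<close> \<open>0 < m\<close> by (simp add: mult_le_cancel_right_pos)
  have "\<bar>\<psi> tb - \<psi> ta\<bar> \<le> B * \<bar>tb - ta\<bar>"
    using psi_lip[of ta tb] b \<open>0 < ta\<close> \<open>ta < tb\<close> \<open>tb < \<delta>\<close> \<open>\<psi> ta < \<psi> tb\<close> by simp
  moreover have "\<bar>ta\<bar> < \<rho>" "\<bar>tb\<bar> < \<rho>" "\<bar>\<psi> ta\<bar> < \<rho>" "\<bar>\<psi> tb\<bar> < \<rho>"
    using a b \<open>0 < ta\<close> \<open>ta < tb\<close> \<open>ta < \<psi> ta\<close> \<open>\<psi> ta < \<psi> tb\<close> by auto
  ultimately have alpha_bound: "\<bar>\<alpha>\<bar> \<le> \<Lambda>" unfolding \<Lambda>_def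
    using affine_conjugacy_slope_bound[where p = \<psi> and s = ta and t = tb, OF bilip \<open>0 < m\<close> _ _ _ _ _ ga gb]
      \<open>ta < tb\<close> by simp
  have "ta < \<rho>" "\<psi> ta < \<rho>" using a by simp_all
  from affine_relation_near_base_point[where p = \<psi>, OF bilip \<open>0 < m\<close> \<open>0 \<le> K\<close> \<open>g 0 = v\<close> \<open>0 < ta\<close> \<open>ta < \<psi> ta\<close>
      this(2) ga alpha_bound]
  have "(\<alpha>, \<beta>) \<noteq> (1, 0)" "\<bar>\<alpha> * v + \<beta> - v\<bar> < \<epsilon>" using a by (simp_all add: algebra_simps)
  then show thesis using that \<open>(\<alpha>, \<beta>) \<in> M\<close> by blast
qed

lemma composite_tangent_to_identity:
  assumes f: "C1_near f v rf" and g: "C1_near g 0 rg" and "g 0 = v"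
    and f_g: "\<And>t. \<bar>t\<bar> < rg \<Longrightarrow> \<bar>g t - v\<bar> < rf \<Longrightarrow> f (g t) \<in> Z_orbit \<psi> t"
  shows "f v = 0" "deriv f v * deriv g 0 = 1"
proof -
  have "0 < rf" "0 < rg" using f g by (simp_all add: C1_near_def)
  then show fv: "f v = 0" using f_g[of 0] \<open>g 0 = v\<close> by (simp add: Z_orbit_0)
  have "isCont g 0" using DERIV_isCont[OF C1_near_deriv[OF g]] \<open>0 < rg\<close> by simp
  then have "\<exists>d>0. \<forall>t. dist t 0 < d \<longrightarrow> dist (g t) (g 0) < rf"
    using \<open>0 < rf\<close> unfolding continuous_at_eps_delta by blast
  then obtain d where "0 < d" and g_close_d: "\<And>t. \<bar>t\<bar> < d \<Longrightarrow> \<bar>g t - v\<bar> < rf"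
    using \<open>g 0 = v\<close> by (auto simp: dist_real_def)
  define \<rho> where "\<rho> = min d rg"
  have "0 < \<rho>" "\<rho> \<le> rg" and g_close: "\<And>t. \<bar>t\<bar> < \<rho> \<Longrightarrow> \<bar>g t - v\<bar> < rf"
    using \<open>0 < d\<close> \<open>0 < rg\<close> g_close_d by (auto simp: \<rho>_def)
  have fg_deriv: "((\<lambda>t. f (g t)) has_real_derivative deriv f (g t) * deriv g t) (at t)" if "\<bar>t\<bar> < \<rho>" for t
    using DERIV_chain2[OF C1_near_deriv[OF f] C1_near_deriv[OF g]] g_close[OF that] that \<open>\<rho> \<le> rg\<close> by simp
  show "deriv f v * deriv g 0 = 1"
  proof (rule orbit_related_germs_same_derivative[where a = "\<lambda>t. t" and b = "\<lambda>t. f (g t)"])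
    show "((\<lambda>t. f (g t)) has_real_derivative deriv f v * deriv g 0) (at 0)"
      using fg_deriv[of 0] \<open>0 < \<rho>\<close> \<open>g 0 = v\<close> by simp
    show "continuous_on {0<..<\<rho>} (\<lambda>t. f (g t))"
      by (intro continuous_at_imp_continuous_on ballI DERIV_isCont[OF fg_deriv]) auto
    show "f (g t) \<in> Z_orbit \<psi> t" if "0 < t" "t < \<rho>" for t
      using f_g g_close that \<open>\<rho> \<le> rg\<close> by simp
    show "((\<lambda>t. t) has_real_derivative 1) (at 0)" by (rule DERIV_ident)
    show "continuous_on {0<..<\<rho>} (\<lambda>t. t)" by (rule continuous_on_id)
  qed (use \<open>0 < \<rho>\<close> fv \<open>g 0 = v\<close> in simp_all)
qed

theorem no_C1_local_equivalence:
  assumes f: "C1_near f v rf" and g: "C1_near g 0 rg" and "g 0 = v" and "countable M"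
    and f_invariant: "\<And>\<alpha> \<beta> u. (\<alpha>, \<beta>) \<in> M \<Longrightarrow> \<bar>u - v\<bar> < rf \<Longrightarrow> \<bar>\<alpha> * u + \<beta> - v\<bar> < rf
        \<Longrightarrow> f (\<alpha> * u + \<beta>) \<in> Z_orbit \<psi> (f u)"
    and g_equivariant: "\<And>t t'. \<bar>t\<bar> < rg \<Longrightarrow> \<bar>t'\<bar> < rg \<Longrightarrow> Z_orbit \<psi> t = Z_orbit \<psi> t'
        \<Longrightarrow> \<exists>(\<alpha>, \<beta>)\<in>M. g t' = \<alpha> * g t + \<beta>"
    and f_g: "\<And>t. \<bar>t\<bar> < rg \<Longrightarrow> \<bar>g t - v\<bar> < rf \<Longrightarrow> f (g t) \<in> Z_orbit \<psi> t"
  shows False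
proof -
  have "0 < rf" using f by (simp add: C1_near_def)
  have "f v = 0" and "deriv f v * deriv g 0 = 1"
    using composite_tangent_to_identity[OF f g \<open>g 0 = v\<close> f_g] by blast+
  then have "deriv f v \<noteq> 0" "deriv g 0 \<noteq> 0" by auto
  obtain \<rho>f mf Kf where "0 < \<rho>f" "\<rho>f \<le> rf" "0 < mf" and f_bilip:
    "\<And>x y. \<bar>x - v\<bar> < \<rho>f \<Longrightarrow> \<bar>y - v\<bar> < \<rho>f \<Longrightarrow> mf * \<bar>y - x\<bar> \<le> \<bar>f y - f x\<bar> \<and> \<bar>f y - f x\<bar> \<le> Kf * \<bar>y - x\<bar>"
    using C1_near_bilipschitz[OF f \<open>deriv f v \<noteq> 0\<close>] by blast
  obtain \<rho>g mg Kg where "0 < \<rho>g" "\<rho>g \<le> rg" "0 < mg" and g_bilip: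
    "\<And>x y. \<bar>x - 0\<bar> < \<rho>g \<Longrightarrow> \<bar>y - 0\<bar> < \<rho>g \<Longrightarrow> mg * \<bar>y - x\<bar> \<le> \<bar>g y - g x\<bar> \<and> \<bar>g y - g x\<bar> \<le> Kg * \<bar>y - x\<bar>"
    using C1_near_bilipschitz[OF g \<open>deriv g 0 \<noteq> 0\<close>] by blast
  have g_equivariant_psi: "\<exists>(\<alpha>, \<beta>)\<in>M. g (\<psi> t) = \<alpha> * g t + \<beta>"
    if "0 < t" "t < \<rho>g" "\<psi> t < \<rho>g" for t
    using g_equivariant[of t "\<psi> t"] Z_orbit_psi[of t] that psi_gt[of t] \<open>\<rho>g \<le> rg\<close> by simp
  obtain \<alpha> \<beta> where "(\<alpha>, \<beta>) \<in> M" "(\<alpha>, \<beta>) \<noteq> (1, 0)" and near: "\<bar>\<alpha> * v + \<beta> - v\<bar> < \<rho>f"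
    using nonidentity_coefficient_near_base_point[OF \<open>g 0 = v\<close> \<open>0 < \<rho>g\<close> \<open>0 < mg\<close> \<open>countable M\<close> \<open>0 < \<rho>f\<close>
        g_bilip[simplified] g_equivariant_psi] by blast
  have "f (\<alpha> * v + \<beta>) \<in> Z_orbit \<psi> (f v)"
    using f_invariant[OF \<open>(\<alpha>, \<beta>) \<in> M\<close>, of v] near \<open>\<rho>f \<le> rf\<close> \<open>0 < rf\<close> by simp
  then have "f (\<alpha> * v + \<beta>) = f v" using \<open>f v = 0\<close> by (simp add: Z_orbit_0)
  then have "mf * \<bar>\<alpha> * v + \<beta> - v\<bar> \<le> 0"
    using f_bilip[of v "\<alpha> * v + \<beta>"] near \<open>0 < \<rho>f\<close> by simp
  then have fixed: "\<alpha> * v + \<beta> = v" using \<open>0 < mf\<close> by (simp add: mult_le_0_iff)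
  moreover have "\<alpha> = 1"
    by (rule invariant_germ_coefficient_eq_1[OF f \<open>f v = 0\<close> \<open>deriv f v \<noteq> 0\<close> fixed])
      (rule f_invariant[OF \<open>(\<alpha>, \<beta>) \<in> M\<close>])
  ultimately show False using \<open>(\<alpha>, \<beta>) \<noteq> (1, 0)\<close> by simp
qed

abbreviation R_mod_psi :: "real set dspace" where
  "R_mod_psi \<equiv> quotient_space real_space (Z_orbit \<psi>)"

lemma R_mod_psi_not_locally_orbit_space_1:
  assumes "D_open R_mod_psi U" "Z_orbit \<psi> 0 \<in> U" "countable \<Gamma>" "subgroup_Aff 1 \<Gamma>" "open_Rn 1 V"
    and "diffeomorphic (subspace R_mod_psi U) (orbit_space 1 V \<Gamma>)"
  shows False
proof -
  obtain F G where F: "dsmooth (subspace R_mod_psi U) (orbit_space 1 V \<Gamma>) F"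
    and G: "dsmooth (orbit_space 1 V \<Gamma>) (subspace R_mod_psi U) G"
    and GF: "\<And>x. x \<in> dcarrier (subspace R_mod_psi U) \<Longrightarrow> G (F x) = x"
    and "\<And>y. y \<in> dcarrier (orbit_space 1 V \<Gamma>) \<Longrightarrow> F (G y) = y"
    using assms(6) by (rule diffeomorphicE) blast
  obtain g rg where g: "C1_near g 0 rg" and g_lift: "\<And>t. \<bar>t\<bar> < rg \<Longrightarrow>
      Z_orbit \<psi> t \<in> U \<and> R1_point (g t) \<in> V \<and> F (Z_orbit \<psi> t) = orbit_of \<Gamma> (R1_point (g t))"
    using dsmooth_quotient_real_space_lift_1[OF assms(1,2) \<open>open_Rn 1 V\<close> F] by (metis diff_zero)
  define v where "v = g 0"
  have "R1_point v \<in> V" using g_lift[of 0] g by (simp add: v_def C1_near_def)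
  obtain f rf where f: "C1_near f v rf"
    and f_lift: "\<And>u. \<bar>u - v\<bar> < rf \<Longrightarrow> G (orbit_of \<Gamma> (R1_point u)) = Z_orbit \<psi> (f u)"
    using dsmooth_orbit_space_lift_1[OF G \<open>open_Rn 1 V\<close> \<open>R1_point v \<in> V\<close>] by blast
  show False
  proof (rule no_C1_local_equivalence[OF f g v_def[symmetric], of "affine_coeffs ` \<Gamma>"])
    show "countable (affine_coeffs ` \<Gamma>)" using \<open>countable \<Gamma>\<close> by simp
  next
    fix \<alpha> \<beta> u assume "(\<alpha>, \<beta>) \<in> affine_coeffs ` \<Gamma>" and u: "\<bar>u - v\<bar> < rf" "\<bar>\<alpha> * u + \<beta> - v\<bar> < rf"
    then have "Z_orbit \<psi> (f (\<alpha> * u + \<beta>)) = Z_orbit \<psi> (f u)"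
      using f_lift[OF u(1)] f_lift[OF u(2)] orbit_of_R1_affine_coeffs[OF assms(4)] by simp
    then show "f (\<alpha> * u + \<beta>) \<in> Z_orbit \<psi> (f u)" using Z_orbit_refl[of "f (\<alpha> * u + \<beta>)"] by simp
  next
    fix t t' assume t: "\<bar>t\<bar> < rg" "\<bar>t'\<bar> < rg" and "Z_orbit \<psi> t = Z_orbit \<psi> t'"
    then have "orbit_of \<Gamma> (R1_point (g t)) = orbit_of \<Gamma> (R1_point (g t'))"
      using g_lift[of t] g_lift[of t'] t by metis
    then show "\<exists>(\<alpha>, \<beta>)\<in>affine_coeffs ` \<Gamma>. g t' = \<alpha> * g t + \<beta>" by (rule orbit_of_R1_eqD[OF assms(4)])
  next
    fix t assume t: "\<bar>t\<bar> < rg" and "\<bar>g t - v\<bar> < rf"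
    have "Z_orbit \<psi> (f (g t)) = G (F (Z_orbit \<psi> t))"
      using f_lift[OF \<open>\<bar>g t - v\<bar> < rf\<close>] g_lift[of t] t by simp
    also have "\<dots> = Z_orbit \<psi> t" using GF[of "Z_orbit \<psi> t"] g_lift[of t] t by (simp add: dcarrier_subspace)
    finally show "f (g t) \<in> Z_orbit \<psi> t" using Z_orbit_refl[of "f (g t)"] by simp
  qed
qed

theorem not_quasifold_R_mod_psi: "\<not> quasifold R_mod_psi"
proof
  assume "quasifold R_mod_psi"
  then obtain n where "quasifold_dim n R_mod_psi" unfolding quasifold_def by blast
  moreover have "Z_orbit \<psi> 0 \<in> dcarrier R_mod_psi" by (simp add: quotient_space_def real_space_def)
  ultimately obtain U \<Gamma> V where "D_open R_mod_psi U" "Z_orbit \<psi> 0 \<in> U" "countable \<Gamma>" "subgroup_Aff n \<Gamma>"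
    "open_Rn n V" and chart: "diffeomorphic (subspace R_mod_psi U) (orbit_space n V \<Gamma>)"
    unfolding quasifold_dim_def by blast
  consider "n = 0" | "n = 1" | "2 \<le> n" by linarith
  then show False
  proof cases
    case 1
    obtain e where "0 < e" "\<And>t. \<bar>t - 0\<bar> < e \<Longrightarrow> Z_orbit \<psi> t \<in> U"
      using D_open_quotient_real_space_nbhd \<open>D_open R_mod_psi U\<close> \<open>Z_orbit \<psi> 0 \<in> U\<close> by blast
    then have "Z_orbit \<psi> (e / 2) \<in> U" by simp
    then have "Z_orbit \<psi> (e / 2) = Z_orbit \<psi> 0"
      by (intro diffeomorphic_orbit_space_0_eq[of V "subspace R_mod_psi U" \<Gamma>])
        (use chart \<open>open_Rn n V\<close> \<open>Z_orbit \<psi> 0 \<in> U\<close> 1 in \<open>simp_all add: dcarrier_subspace\<close>)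
    then show False using Z_orbit_refl[of "e / 2"] Z_orbit_0 \<open>0 < e\<close> by simp
  next
    case 2
    then show False
      using R_mod_psi_not_locally_orbit_space_1[OF \<open>D_open R_mod_psi U\<close> \<open>Z_orbit \<psi> 0 \<in> U\<close> \<open>countable \<Gamma>\<close>]
        \<open>subgroup_Aff n \<Gamma>\<close> \<open>open_Rn n V\<close> chart by simp
  next
    case 3
    then show False
      by (rule quotient_real_space_not_locally_orbit_space_ge_2[OF _ \<open>countable \<Gamma>\<close> \<open>subgroup_Aff n \<Gamma>\<close>
            \<open>open_Rn n V\<close> \<open>Z_orbit \<psi> 0 \<in> U\<close> chart])
  qed
qed

end

theorem proposition8:
  fixes h \<psi> :: "real \<Rightarrow> real"
  assumes "smooth_real_fun h"
    and "flat_at h 0"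
    and "\<forall>x. x \<noteq> 0 \<longrightarrow> h x > 0"
    and "complete_vf h"
    and "time_one_flow h \<psi>"
  shows "\<not> quasifold (quotient_space real_space (Z_orbit \<psi>))"
proof -
  have smooth: "((deriv ^^ k) h) differentiable (at x)" for k x
    using \<open>smooth_real_fun h\<close> unfolding smooth_real_fun_def by blast
  have flat: "(deriv ^^ k) h 0 = 0" for k
    using \<open>flat_at h 0\<close> unfolding flat_at_def by blast
  interpret flat_vector_field h \<psi>
  proof
    show "(h has_real_derivative deriv h x) (at x)" for x
      using smooth[of 0 x] by (simp add: DERIV_deriv_iff_real_differentiable)
    show "isCont (deriv h) x" for x
      using smooth[of 1 x] by (simp add: differentiable_imp_continuous_within)
    show "h 0 = 0" "deriv h 0 = 0" using flat[of 0] flat[of 1] by simp_all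
  qed (use assms(3-5) in auto)
  show ?thesis by (rule not_quasifold_R_mod_psi)
qed

end
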